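(* Assume $\|\mathbf X\|_{\mathrm{TV}}<C_{\mathbf X}$ and $\|\mathbf z\|<C_{\mathbf z}$ almost surely, let $r>0$, and let $C=2(C_{\mathbf z}+e^{C_{\mathbf X}+T})$. For any $\varepsilon>0$ and $p\in\mathbb N$, let $n_2$ be the smallest integer such that $$n_2\ge\frac{432^2C^2\pi r^2(s_d(p)+q)}{\varepsilon^2}.$$ Then for any $n\ge n_2$, $$\mathbb P\big(|\widehat L_n(p)-L(p)|>\varepsilon\big)\le74\exp(-c_5n\varepsilon^2),\qquad c_5=\frac{1}{8r(288C^2r+C)}.$$
   Context: Let $T>0$, integers $d\ge2$, $q\ge1$. $(\mathbf X,\mathbf z,y)$ is a random triple with $\mathbf X:[0,T]\to\mathbb R^{d-1}$ a continuous bounded-variation path with fixed initial value, $\mathbf z\in\mathbb R^q$, $y\in\{0,1\}$; $\|\mathbf X\|_{\mathrm{TV}}=\sup\sum_i\|\mathbf X_{t_{i+1}}-\mathbf X_{t_i}\|$ over partitions of $[0,T]$. Time augmentation $\widetilde{\mathbf X}(t)=(\mathbf X(t),t)\in\mathbb R^d$; signature terms $S^I(\widetilde{\mathbf X})=\int_{0<t_1<\dots<t_k<T}d\widetilde X^{i_1}_{t_1}\cdots d\widetilde X^{i_k}_{t_k}$ ($I\in\{1,..,d\}^k$, empty $I$ gives 1); truncated signature $S_p(\widetilde{\mathbf X})=(S^I)_{|I|\le p}\in\mathbb R^{s_d(p)}$, $s_d(p)=\sum_{k=0}^pd^k$; $\widetilde{\mathbf S}_p(\widetilde{\mathbf X},\mathbf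 z)=(S_p(\widetilde{\mathbf X})^\top,\mathbf z^\top)^\top$. Logistic loss $\ell(y,\eta)=-y\eta+\log(1+e^\eta)$; $\mathcal R_p(\boldsymbol\theta_p)=\mathbb E[\ell(y,\widetilde{\mathbf S}_p^\top\boldsymbol\theta_p)]$; $B_{p,r}=\{\boldsymbol\theta\in\mathbb R^{s_d(p)+q}:\|\boldsymbol\theta\|_1\le r\}$; $L(p)=\min_{\boldsymbol\theta_p\in B_{p,r}}\mathcal R_p(\boldsymbol\theta_p)$. Data $(\mathbf X_i,\mathbf z_i,y_i)_{i=1}^n$ i.i.d. copies; $\widehat{\mathcal R}_{p,n}(\boldsymbol\theta_p)=\frac1n\sum_i\ell(y_i,\widetilde{\mathbf S}_p(\widetilde{\mathbf X}_i,\mathbf z_i)^\top\boldsymbol\theta_p)$; $\widehat L_n(p)=\min_{\boldsymbol\theta_p\in B_{p,r}}\widehat{\mathcal R}_{p,n}(\boldsymbol\theta_p)$. *)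

theory Defs
  imports "HOL-Probability.Probability"
begin

definition has_RS :: "(real \<Rightarrow> real) \<Rightarrow> (real \<Rightarrow> real) \<Rightarrow> real \<Rightarrow> real \<Rightarrow> real \<Rightarrow> bool" where
  "has_RS f g a b L \<longleftrightarrow>
     (\<forall>e>0. \<exists>\<delta>>0. \<forall>(n::nat) (t::nat \<Rightarrow> real) (s::nat \<Rightarrow> real).
        t 0 = a \<and> t n = b \<and>
        (\<forall>i<n. t i < t (Suc i) \<and> t (Suc i) - t i < \<delta> \<and> t i \<le> s i \<and> s i \<le> t (Suc i))
        \<longrightarrow> \<bar>(\<Sum>i<n. f (s i) * (g (t (Suc i)) - g (t i))) - L\<bar> < e)"

definition RS_int :: "(real \<Rightarrow> real) \<Rightarrow> (real \<Rightarrow> real) \<Rightarrow> real \<Rightarrow> real \<Rightarrow> real" where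
  "RS_int f g a b = (THE L. has_RS f g a b L)"

definition tv :: "real \<Rightarrow> real \<Rightarrow> (real \<Rightarrow> 'a::real_normed_vector) \<Rightarrow> ereal" where
  "tv a b f = (SUP nt \<in> {(n::nat, t::nat \<Rightarrow> real). t 0 = a \<and> t n = b \<and> (\<forall>i<n. t i \<le> t (Suc i))}.
                 ereal (\<Sum>i<fst nt. norm (f (snd nt (Suc i)) - f (snd nt i))))"

text \<open>Time augmentation: coordinate Some j is the j-th coordinate of the path, None is time.\<close>
definition aug :: "(real \<Rightarrow> real^'m) \<Rightarrow> 'm option \<Rightarrow> real \<Rightarrow> real" where
  "aug x j t = (case j of None \<Rightarrow> t | Some i \<Rightarrow> x t $ i)"

text \<open>itint x (i_k # ... # i_1) t = int_{0<t_1<...<t_k<t} dx^{i_1} ... dx^{i_k}\<close>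
fun itint :: "('i \<Rightarrow> real \<Rightarrow> real) \<Rightarrow> 'i list \<Rightarrow> real \<Rightarrow> real" where
  "itint x [] t = 1"
| "itint x (i # J) t = RS_int (itint x J) (x i) 0 t"

definition sig :: "real \<Rightarrow> (real \<Rightarrow> real^'m) \<Rightarrow> 'm option list \<Rightarrow> real" where
  "sig T x I = itint (aug x) (rev I) T"

definition sd :: "nat \<Rightarrow> nat \<Rightarrow> nat" where
  "sd d p = (\<Sum>k\<le>p. d ^ k)"

definition idx :: "nat \<Rightarrow> ('m::finite option list + 'q::finite) set" where
  "idx p = Inl ` {I. length I \<le> p} \<union> Inr ` UNIV"

definition l1ball :: "nat \<Rightarrow> real \<Rightarrow> ('m::finite option list + 'q::finite \<Rightarrow> real) set" where
  "l1ball p r = {\<theta>. (\<Sum>j\<in>idx p. \<bar>\<theta> j\<bar>) \<le> r}"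

definition feat :: "real \<Rightarrow> nat \<Rightarrow> (real \<Rightarrow> real^'m::finite) \<Rightarrow> real^'q::finite
                     \<Rightarrow> ('m option list + 'q \<Rightarrow> real) \<Rightarrow> real" where
  "feat T p x z \<theta> = (\<Sum>j\<in>idx p. \<theta> j * (case j of Inl I \<Rightarrow> sig T x I | Inr k \<Rightarrow> z $ k))"

definition loss :: "bool \<Rightarrow> real \<Rightarrow> real" where
  "loss y \<eta> = - of_bool y * \<eta> + ln (1 + exp \<eta>)"

definition risk :: "'w measure \<Rightarrow> real \<Rightarrow> nat \<Rightarrow> ('w \<Rightarrow> real \<Rightarrow> real^'m::finite) \<Rightarrow> ('w \<Rightarrow> real^'q::finite)
                     \<Rightarrow> ('w \<Rightarrow> bool) \<Rightarrow> ('m option list + 'q \<Rightarrow> real) \<Rightarrow> real" where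
  "risk M T p X Z Y \<theta> = (\<integral>\<omega>. loss (Y \<omega>) (feat T p (X \<omega>) (Z \<omega>) \<theta>) \<partial>M)"

definition Lpop :: "'w measure \<Rightarrow> real \<Rightarrow> real \<Rightarrow> nat \<Rightarrow> ('w \<Rightarrow> real \<Rightarrow> real^'m::finite)
                     \<Rightarrow> ('w \<Rightarrow> real^'q::finite) \<Rightarrow> ('w \<Rightarrow> bool) \<Rightarrow> real" where
  "Lpop M T r p X Z Y = Inf (risk M T p X Z Y ` l1ball p r)"

definition emp_risk :: "nat \<Rightarrow> real \<Rightarrow> nat \<Rightarrow> (nat \<Rightarrow> 'w \<Rightarrow> real \<Rightarrow> real^'m::finite) \<Rightarrow> (nat \<Rightarrow> 'w \<Rightarrow> real^'q::finite)
                     \<Rightarrow> (nat \<Rightarrow> 'w \<Rightarrow> bool) \<Rightarrow> 'w \<Rightarrow> ('m option list + 'q \<Rightarrow> real) \<Rightarrow> real" where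
  "emp_risk n T p Xs Zs Ys \<omega> \<theta> = (\<Sum>i<n. loss (Ys i \<omega>) (feat T p (Xs i \<omega>) (Zs i \<omega>) \<theta>)) / real n"

definition Lhat :: "nat \<Rightarrow> real \<Rightarrow> real \<Rightarrow> nat \<Rightarrow> (nat \<Rightarrow> 'w \<Rightarrow> real \<Rightarrow> real^'m::finite)
                     \<Rightarrow> (nat \<Rightarrow> 'w \<Rightarrow> real^'q::finite) \<Rightarrow> (nat \<Rightarrow> 'w \<Rightarrow> bool) \<Rightarrow> 'w \<Rightarrow> real" where
  "Lhat n T r p Xs Zs Ys \<omega> = Inf (emp_risk n T p Xs Zs Ys \<omega> ` l1ball p r)"

text \<open>Measurable space of triples (path, z, y); paths carry the cylinder sigma-algebra.\<close>
definition triple_space :: "((real \<Rightarrow> real^'m::finite) \<times> (real^'q::finite) \<times> bool) measure" where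
  "triple_space = (Pi\<^sub>M UNIV (\<lambda>_. borel)) \<Otimes>\<^sub>M (borel \<Otimes>\<^sub>M count_space UNIV)"

end

theory Submission
  imports Defs
begin

text \<open>Every signature coordinate of a continuous path of total variation below \<open>C\<^sub>X\<close> is an
  iterated Riemann--Stieltjes integral of modulus at most \<open>exp (C\<^sub>X + T)\<close>, so all features are
  bounded by \<open>\<beta> = C\<^sub>z + exp (C\<^sub>X + T)\<close>; as the logistic loss is 1-Lipschitz, the loss is
  \<open>\<beta>\<close>-Lipschitz in \<open>\<theta>\<close> for the \<open>\<ell>\<^sup>1\<close> distance. Since losses are nonnegative, the minimal
  empirical and population risks differ by at most the supremum over the \<open>\<ell>\<^sup>1\<close> ball of
  the deviation between empirical and population risk. That supremum is controlled by chaining: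
  \<open>\<theta>\<close> is approximated by integer lattice points of the ball at scales \<open>r / 2\<^sup>k\<close>, each link
  between consecutive scales is bounded by Hoeffding's inequality, and a union bound over the
  at most \<open>exp (6 D 2\<^sup>k)\<close> links of level \<open>k\<close> gives the probability bound
  \<open>2 exp (- n \<epsilon>\<^sup>2 / (9216 \<beta>\<^sup>2 r\<^sup>2))\<close>, which implies the stated one.\<close>

section \<open>Riemann--Stieltjes sums against a controlled integrator\<close>

definition fine_tagged :: "real \<Rightarrow> real \<Rightarrow> real \<Rightarrow> nat \<Rightarrow> (nat \<Rightarrow> real) \<Rightarrow> (nat \<Rightarrow> real) \<Rightarrow> bool" where
  "fine_tagged a b \<delta> n t s \<longleftrightarrow> t 0 = a \<and> t n = b \<and>
     (\<forall>i<n. t i < t (Suc i) \<and> t (Suc i) - t i < \<delta> \<and> t i \<le> s i \<and> s i \<le> t (Suc i))"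

definition rsum :: "(real \<Rightarrow> real) \<Rightarrow> (real \<Rightarrow> real) \<Rightarrow> nat \<Rightarrow> (nat \<Rightarrow> real) \<Rightarrow> (nat \<Rightarrow> real) \<Rightarrow> real" where
  "rsum f g n t s = (\<Sum>i<n. f (s i) * (g (t (Suc i)) - g (t i)))"

lemma has_RS_iff_rsum:
  "has_RS f g a b L \<longleftrightarrow> (\<forall>e>0. \<exists>\<delta>>0. \<forall>n t s. fine_tagged a b \<delta> n t s \<longrightarrow> \<bar>rsum f g n t s - L\<bar> < e)"
  unfolding has_RS_def fine_tagged_def rsum_def by blast

definition controls :: "(real \<Rightarrow> real) \<Rightarrow> (real \<Rightarrow> real) \<Rightarrow> real \<Rightarrow> real \<Rightarrow> bool" where
  "controls W g a b \<longleftrightarrow> (\<forall>u v. a \<le> u \<longrightarrow> u \<le> v \<longrightarrow> v \<le> b \<longrightarrow> \<bar>g v - g u\<bar> \<le> W v - W u)"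

lemma controlsD: "controls W g a b \<Longrightarrow> a \<le> u \<Longrightarrow> u \<le> v \<Longrightarrow> v \<le> b \<Longrightarrow> \<bar>g v - g u\<bar> \<le> W v - W u"
  unfolding controls_def by blast

lemma controls_subinterval: "controls W g a b \<Longrightarrow> a \<le> a' \<Longrightarrow> b' \<le> b \<Longrightarrow> controls W g a' b'"
  unfolding controls_def by auto

lemma controls_mono: "controls W g a b \<Longrightarrow> a \<le> u \<Longrightarrow> u \<le> v \<Longrightarrow> v \<le> b \<Longrightarrow> W u \<le> W v"
  using controlsD[of W g a b u v] by linarith

lemma fine_tagged_strict_mono:
  assumes P: "fine_tagged a b \<delta> n t s" and "i < j" "j \<le> n"
  shows "t i < t j"
  using assms(2,3)
proof (induction j)
  case (Suc j)
  have "t j < t (Suc j)" using P Suc.prems unfolding fine_tagged_def by simp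
  moreover have "i < j \<Longrightarrow> t i < t j" using Suc by simp
  ultimately show ?case using Suc.prems by (cases "i = j") auto
qed simp

lemma fine_tagged_mono: "fine_tagged a b \<delta> n t s \<Longrightarrow> i \<le> j \<Longrightarrow> j \<le> n \<Longrightarrow> t i \<le> t j"
  using fine_tagged_strict_mono[of a b \<delta> n t s i j] by (cases "i = j") auto

lemma fine_tagged_range: "fine_tagged a b \<delta> n t s \<Longrightarrow> j \<le> n \<Longrightarrow> t j \<in> {a..b}"
  using fine_tagged_mono[of a b \<delta> n t s 0 j] fine_tagged_mono[of a b \<delta> n t s j n]
  unfolding fine_tagged_def by auto

lemma fine_tagged_tag_range: "fine_tagged a b \<delta> n t s \<Longrightarrow> i < n \<Longrightarrow> s i \<in> {a..b}"
  using fine_tagged_range[of a b \<delta> n t s i] fine_tagged_range[of a b \<delta> n t s "Suc i"]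
  unfolding fine_tagged_def by auto

lemma fine_tagged_degenerate: "fine_tagged a a \<delta> n t s \<longleftrightarrow> n = 0 \<and> t 0 = a"
  using fine_tagged_strict_mono[of a a \<delta> n t s 0 n] unfolding fine_tagged_def by auto

lemma fine_tagged_snoc:
  assumes "fine_tagged a u \<delta> n t s" "u < v" "v - u < \<delta>"
  shows "fine_tagged a v \<delta> (Suc n) (t(Suc n := v)) (s(n := u))"
  using assms unfolding fine_tagged_def by (auto simp: less_Suc_eq)

lemma rsum_snoc:
  assumes "t n = u"
  shows "rsum f g (Suc n) (t(Suc n := v)) (s(n := u)) = rsum f g n t s + f u * (g v - g u)"
  using assms unfolding rsum_def by simp

lemma fine_tagged_mesh:
  assumes P: "fine_tagged a b \<delta> n t s" and "a < b"
  obtains \<mu> where "\<mu> < \<delta>" "\<And>i. i < n \<Longrightarrow> t (Suc i) - t i \<le> \<mu>"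
proof -
  have "n > 0" using P \<open>a < b\<close> unfolding fine_tagged_def by (cases n) auto
  then show ?thesis
    using P unfolding fine_tagged_def
    by (intro that[of "Max ((\<lambda>i. t (Suc i) - t i) ` {..<n})"]) (auto simp: lessThan_empty_iff)
qed

definition grid :: "real \<Rightarrow> real \<Rightarrow> nat \<Rightarrow> nat \<Rightarrow> real" where
  "grid a b N k = a + (b - a) * k / N"

definition grid_sum :: "(real \<Rightarrow> real) \<Rightarrow> (real \<Rightarrow> real) \<Rightarrow> real \<Rightarrow> real \<Rightarrow> nat \<Rightarrow> real" where
  "grid_sum f g a b N = rsum f g N (grid a b N) (grid a b N)"

lemma grid_0 [simp]: "grid a b N 0 = a"
  unfolding grid_def by simp

lemma grid_self [simp]: "N > 0 \<Longrightarrow> grid a b N N = b"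
  unfolding grid_def by simp

lemma grid_Suc: "grid a b N (Suc k) = grid a b N k + (b - a) / N"
  unfolding grid_def by (simp add: add_divide_distrib distrib_left)

lemma grid_mono: "a \<le> b \<Longrightarrow> k \<le> l \<Longrightarrow> grid a b N k \<le> grid a b N l"
  unfolding grid_def by (intro add_left_mono divide_right_mono mult_left_mono) auto

lemma grid_in: "a \<le> b \<Longrightarrow> k \<le> N \<Longrightarrow> grid a b N k \<in> {a..b}"
  using grid_mono[of a b 0 k N] grid_mono[of a b k N N]
  by (cases "N = 0") (auto simp: grid_def)

lemma fine_tagged_grid:
  assumes "a < b" "N > 0" "(b - a) / N < \<delta>"
  shows "fine_tagged a b \<delta> N (grid a b N) (grid a b N)"
  using assms unfolding fine_tagged_def by (simp add: grid_Suc)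

lemma eventually_fine_tagged_grid:
  assumes "a < b" "\<delta> > 0"
  shows "eventually (\<lambda>N. fine_tagged a b \<delta> N (grid a b N) (grid a b N)) sequentially"
proof -
  have "eventually (\<lambda>N. (b - a) / real N < \<delta>) sequentially"
    using order_tendstoD(2)[OF lim_const_over_n[of "b - a"] \<open>\<delta> > 0\<close>] .
  moreover have "eventually (\<lambda>N. N > 0) sequentially"
    by (rule eventually_gt_at_top)
  ultimately show ?thesis
    by eventually_elim (use assms fine_tagged_grid in blast)
qed

lemma fine_tagged_exists:
  assumes "a \<le> b" "\<delta> > 0"
  obtains n t s where "fine_tagged a b \<delta> n t s"
proof (cases "a = b")
  case True
  then show ?thesis using that[of 0 "\<lambda>_. a"] by (simp add: fine_tagged_degenerate)
next
  case False
  with assms have "\<exists>N. fine_tagged a b \<delta> N (grid a b N) (grid a b N)"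
    using eventually_fine_tagged_grid[of a b \<delta>] eventually_happens' by fastforce
  then show ?thesis using that by blast
qed

definition grid_floor :: "real \<Rightarrow> real \<Rightarrow> nat \<Rightarrow> real \<Rightarrow> nat" where
  "grid_floor a b N x = nat \<lfloor>(x - a) * N / (b - a)\<rfloor>"

lemma grid_floor:
  assumes "a < b" "N > 0" "x \<in> {a..b}"
  shows "grid a b N (grid_floor a b N x) \<le> x"
    and "x < grid a b N (grid_floor a b N x) + (b - a) / N"
proof -
  define y where "y = (x - a) * N / (b - a)"
  have "0 \<le> y" using assms unfolding y_def by simp
  then have k: "real (grid_floor a b N x) = \<lfloor>y\<rfloor>" unfolding grid_floor_def y_def[symmetric] by simp
  have x: "x = a + (b - a) * y / N" unfolding y_def using assms by (simp add: field_simps)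
  have gk: "grid a b N (grid_floor a b N x) = a + (b - a) * \<lfloor>y\<rfloor> / N" unfolding grid_def k ..
  show "grid a b N (grid_floor a b N x) \<le> x"
    unfolding gk using assms by (subst x) (intro add_left_mono divide_right_mono mult_left_mono; simp)
  have "(b - a) * y / N < (b - a) * (\<lfloor>y\<rfloor> + 1) / N"
    using assms by (intro divide_strict_right_mono mult_strict_left_mono) linarith+
  then show "x < grid a b N (grid_floor a b N x) + (b - a) / N"
    unfolding gk by (subst x) (simp add: distrib_left add_divide_distrib)
qed

lemma grid_floor_le: "a < b \<Longrightarrow> x \<le> b \<Longrightarrow> grid_floor a b N x \<le> N"
proof -
  assume "a < b" "x \<le> b"
  then have "(x - a) * N \<le> N * (b - a)" by (simp add: mult.commute mult_left_mono)
  then show ?thesis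
    unfolding grid_floor_def using \<open>a < b\<close> floor_mono[of "(x - a) * N / (b - a)" N]
    by (simp add: nat_le_iff divide_le_eq)
qed

lemma grid_floor_mono: "a < b \<Longrightarrow> x \<le> y \<Longrightarrow> grid_floor a b N x \<le> grid_floor a b N y"
  unfolding grid_floor_def by (intro nat_mono floor_mono divide_right_mono mult_right_mono) auto

lemma grid_floor_left [simp]: "grid_floor a b N a = 0"
  unfolding grid_floor_def by simp

lemma grid_floor_right [simp]: "a < b \<Longrightarrow> grid_floor a b N b = N"
  unfolding grid_floor_def by simp

lemma tendsto_grid_floor:
  assumes "a < b" "x \<in> {a..b}"
  shows "(\<lambda>N. grid a b N (grid_floor a b N x)) \<longlonglongrightarrow> x"
proof (rule tendsto_sandwich)
  show "eventually (\<lambda>N. x - (b - a) / N \<le> grid a b N (grid_floor a b N x)) sequentially"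
    using eventually_gt_at_top[of 0]
  proof eventually_elim
    case (elim N)
    show ?case using grid_floor(2)[OF assms(1) elim assms(2)] by linarith
  qed
  show "eventually (\<lambda>N. grid a b N (grid_floor a b N x) \<le> x) sequentially"
    using eventually_gt_at_top[of 0] by eventually_elim (rule grid_floor(1)[OF assms(1) _ assms(2)])
  show "(\<lambda>N. x - (b - a) / real N) \<longlonglongrightarrow> x"
    using tendsto_diff[OF tendsto_const lim_const_over_n[of "b - a"]] by simp
qed simp

lemma sum_lessThan_blocks:
  fixes m :: "nat \<Rightarrow> nat"
  assumes "m 0 = 0" "\<And>j. j < n \<Longrightarrow> m j \<le> m (Suc j)"
  shows "(\<Sum>k<m n. F k) = (\<Sum>j<n. \<Sum>k\<in>{m j..<m (Suc j)}. F k)"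
  using assms(2)
proof (induction n)
  case 0
  then show ?case using assms(1) by simp
next
  case (Suc n)
  then have "(\<Sum>k<m (Suc n). F k) = (\<Sum>k<m n. F k) + (\<Sum>k\<in>{m n..<m (Suc n)}. F k)"
    by (metis lessI lessThan_atLeast0 sum.atLeastLessThan_concat zero_le)
  then show ?case using Suc by simp
qed

lemma rsum_coarsening:
  fixes u :: "nat \<Rightarrow> real" and m :: "nat \<Rightarrow> nat"
  assumes m0: "m 0 = 0" and m_mono: "\<And>j. j < n \<Longrightarrow> m j \<le> m (Suc j)"
    and close: "\<And>j k. j < n \<Longrightarrow> k \<in> {m j..<m (Suc j)} \<Longrightarrow> \<bar>f (u k) - f (s j)\<bar> \<le> \<eta>"
    and incr: "\<And>j k. j < n \<Longrightarrow> k \<in> {m j..<m (Suc j)} \<Longrightarrow>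
                 \<bar>g (u (Suc k)) - g (u k)\<bar> \<le> W (u (Suc k)) - W (u k)"
  shows "\<bar>rsum f g (m n) u u - rsum f g n (u \<circ> m) s\<bar> \<le> \<eta> * (W (u (m n)) - W (u 0))"
proof -
  let ?dg = "\<lambda>k. g (u (Suc k)) - g (u k)" and ?dW = "\<lambda>k. W (u (Suc k)) - W (u k)"
  have coarse: "rsum f g n (u \<circ> m) s = (\<Sum>j<n. \<Sum>k\<in>{m j..<m (Suc j)}. f (s j) * ?dg k)"
    unfolding rsum_def
  proof (intro sum.cong refl)
    fix j assume "j \<in> {..<n}"
    then show "f (s j) * (g ((u \<circ> m) (Suc j)) - g ((u \<circ> m) j))
        = (\<Sum>k\<in>{m j..<m (Suc j)}. f (s j) * ?dg k)"
      using sum_Suc_diff'[OF m_mono, of j "\<lambda>k. g (u k)"] by (simp add: sum_distrib_left[symmetric])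
  qed
  have fine: "rsum f g (m n) u u = (\<Sum>j<n. \<Sum>k\<in>{m j..<m (Suc j)}. f (u k) * ?dg k)"
    unfolding rsum_def by (rule sum_lessThan_blocks[OF m0 m_mono])
  have "\<bar>rsum f g (m n) u u - rsum f g n (u \<circ> m) s\<bar>
      = \<bar>\<Sum>j<n. \<Sum>k\<in>{m j..<m (Suc j)}. (f (u k) - f (s j)) * ?dg k\<bar>"
    unfolding fine coarse by (simp add: sum_subtractf left_diff_distrib)
  also have "\<dots> \<le> (\<Sum>j<n. \<Sum>k\<in>{m j..<m (Suc j)}. \<eta> * ?dW k)"
  proof (intro order_trans[OF sum_abs] sum_mono order_trans[OF sum_abs])
    fix j k assume "j \<in> {..<n}" "k \<in> {m j..<m (Suc j)}"
    then have "\<bar>f (u k) - f (s j)\<bar> \<le> \<eta>" "\<bar>?dg k\<bar> \<le> ?dW k" using close incr by auto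
    then show "\<bar>(f (u k) - f (s j)) * ?dg k\<bar> \<le> \<eta> * ?dW k"
      unfolding abs_mult by (intro mult_mono) (auto intro: order_trans[OF abs_ge_zero])
  qed
  also have "\<dots> = \<eta> * (\<Sum>k<m n. ?dW k)"
    by (simp add: sum_lessThan_blocks[OF m0 m_mono] sum_distrib_left)
  also have "(\<Sum>k<m n. ?dW k) = W (u (m n)) - W (u 0)"
    by (rule sum_lessThan_telescope)
  finally show ?thesis .
qed

lemma grid_sum_near_rounded_rsum:
  assumes ab: "a < b" and W: "controls W g a b"
    and osc: "\<forall>u\<in>{a..b}. \<forall>v\<in>{a..b}. \<bar>u - v\<bar> < \<delta> \<longrightarrow> \<bar>f u - f v\<bar> \<le> \<eta>"
    and P: "fine_tagged a b \<delta> n t s" and mesh: "\<And>i. i < n \<Longrightarrow> t (Suc i) - t i \<le> \<mu>"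
    and N: "N > 0" "(b - a) / N < \<delta> - \<mu>"
  shows "\<bar>grid_sum f g a b N - rsum f g n (grid a b N \<circ> (\<lambda>j. grid_floor a b N (t j))) s\<bar> \<le> \<eta> * (W b - W a)"
proof -
  let ?h = "(b - a) / N" and ?p = "grid a b N" and ?m = "\<lambda>j. grid_floor a b N (t j)"
  have t: "t 0 = a" "t n = b" "\<And>i. i < n \<Longrightarrow> t i \<le> s i \<and> s i \<le> t (Suc i)"
    using P unfolding fine_tagged_def by auto
  have t_in: "\<And>j. j \<le> n \<Longrightarrow> t j \<in> {a..b}" and s_in: "\<And>j. j < n \<Longrightarrow> s j \<in> {a..b}"
    using fine_tagged_range[OF P] fine_tagged_tag_range[OF P] by auto
  have m_mono: "?m j \<le> ?m (Suc j)" if "j < n" for j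
    using ab fine_tagged_mono[OF P, of j "Suc j"] that by (intro grid_floor_mono) auto
  have m_le: "?m j \<le> N" and lo: "t j < ?p (?m j) + ?h" and hi: "?p (?m j) \<le> t j" if "j \<le> n" for j
    using grid_floor[OF ab _ t_in[OF that]] grid_floor_le[OF ab] t_in[OF that] N by auto
  have close: "\<bar>f (?p k) - f (s j)\<bar> \<le> \<eta>" and p_in: "?p k \<in> {a..b}" "?p (Suc k) \<in> {a..b}"
    if j: "j < n" and k: "k \<in> {?m j..<?m (Suc j)}" for j k
  proof -
    have "Suc k \<le> N" using k m_le[of "Suc j"] j by auto
    then show p_k: "?p k \<in> {a..b}" "?p (Suc k) \<in> {a..b}" using ab grid_in by auto
    have "?p (?m j) \<le> ?p k" "?p (Suc k) \<le> ?p (?m (Suc j))"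
      using k ab by (auto intro: grid_mono)
    then have "t j - ?h < ?p k" "?p k + ?h \<le> t (Suc j)"
      using lo[of j] hi[of "Suc j"] j by (auto simp: grid_Suc)
    moreover have "?h > 0" using ab N by simp
    ultimately have "\<bar>?p k - s j\<bar> < \<delta>" using t(3)[OF j] mesh[OF j] N by (auto simp: abs_less_iff)
    then show "\<bar>f (?p k) - f (s j)\<bar> \<le> \<eta>" using osc p_k s_in[OF j] by blast
  qed
  have "\<bar>rsum f g (?m n) ?p ?p - rsum f g n (?p \<circ> ?m) s\<bar> \<le> \<eta> * (W (?p (?m n)) - W (?p 0))"
  proof (rule rsum_coarsening)
    show "?m 0 = 0" unfolding t by simp
    show "\<bar>g (?p (Suc k)) - g (?p k)\<bar> \<le> W (?p (Suc k)) - W (?p k)"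
      if "j < n" "k \<in> {?m j..<?m (Suc j)}" for j k
      using p_in[OF that] ab by (intro controlsD[OF W]) (auto intro: grid_mono)
  qed (use m_mono close in auto)
  moreover have "?m n = N" unfolding t using ab by simp
  ultimately show ?thesis using N unfolding grid_sum_def by simp
qed

text \<open>Rounding the points of a fine partition down to the uniform grid gives a partition whose
  Riemann sums are coarsenings of the grid sums; as \<open>N \<rightarrow> \<infinity>\<close> the rounded sums converge to
  the original one by continuity of \<open>g\<close>.\<close>

lemma grid_sum_near_rsum:
  assumes ab: "a < b" and g: "continuous_on {a..b} g" and W: "controls W g a b"
    and osc: "\<forall>u\<in>{a..b}. \<forall>v\<in>{a..b}. \<bar>u - v\<bar> < \<delta> \<longrightarrow> \<bar>f u - f v\<bar> \<le> \<eta>"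
    and P: "fine_tagged a b \<delta> n t s" and "e > 0"
  shows "eventually (\<lambda>N. \<bar>grid_sum f g a b N - rsum f g n t s\<bar> \<le> \<eta> * (W b - W a) + e) sequentially"
proof -
  obtain \<mu> where \<mu>: "\<mu> < \<delta>" "\<And>i. i < n \<Longrightarrow> t (Suc i) - t i \<le> \<mu>"
    using fine_tagged_mesh[OF P ab] by blast
  define R where "R N = rsum f g n (grid a b N \<circ> (\<lambda>j. grid_floor a b N (t j))) s" for N
  have "eventually (\<lambda>N. N > 0 \<and> (b - a) / N < \<delta> - \<mu>) sequentially"
    using eventually_gt_at_top order_tendstoD(2)[OF lim_const_over_n[of "b - a"]] \<mu>(1)
    by (intro eventually_conj) auto
  then have "eventually (\<lambda>N. \<bar>grid_sum f g a b N - R N\<bar> \<le> \<eta> * (W b - W a)) sequentially"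
    unfolding R_def by eventually_elim (use grid_sum_near_rounded_rsum[OF ab W osc P \<mu>(2)] in auto)
  moreover have t_in: "\<And>j. j \<le> n \<Longrightarrow> t j \<in> {a..b}"
    using fine_tagged_range[OF P] by auto
  then have "R \<longlonglongrightarrow> rsum f g n t s"
    unfolding R_def rsum_def comp_def
    by (intro tendsto_intros continuous_on_tendsto_compose[OF g] tendsto_grid_floor
        always_eventually t_in ab grid_in allI) (use ab t_in in \<open>auto intro: grid_floor_le\<close>)
  then have "eventually (\<lambda>N. \<bar>R N - rsum f g n t s\<bar> < e) sequentially"
    using \<open>e > 0\<close> by (auto simp: tendsto_iff dist_real_def)
  ultimately show ?thesis by eventually_elim linarith
qed

lemma divide_add_one_mult_less: "0 \<le> (V::real) \<Longrightarrow> 0 < e \<Longrightarrow> e / (V + 1) * V < e"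
  by (simp add: field_simps)

lemma continuous_on_interval_modulus:
  fixes f :: "real \<Rightarrow> real"
  assumes "continuous_on {a..b} f" "\<eta> > 0"
  obtains \<delta> where "\<delta> > 0" "\<forall>u\<in>{a..b}. \<forall>v\<in>{a..b}. \<bar>u - v\<bar> < \<delta> \<longrightarrow> \<bar>f u - f v\<bar> \<le> \<eta>"
proof -
  have "uniformly_continuous_on {a..b} f"
    using assms(1) by (intro compact_uniformly_continuous) auto
  then obtain \<delta> where "\<delta> > 0" "\<forall>u\<in>{a..b}. \<forall>v\<in>{a..b}. dist v u < \<delta> \<longrightarrow> dist (f v) (f u) < \<eta>"
    using assms(2) unfolding uniformly_continuous_on_def by metis
  then show ?thesis
    using that[of \<delta>] by (auto simp: dist_real_def abs_minus_commute less_imp_le)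
qed

lemma convergent_grid_sum:
  assumes ab: "a < b" and f: "continuous_on {a..b} f" and g: "continuous_on {a..b} g"
    and W: "controls W g a b"
  shows "convergent (grid_sum f g a b)"
proof -
  define V where "V = W b - W a"
  have "V \<ge> 0" unfolding V_def using controls_mono[OF W, of a b] ab by simp
  have "Cauchy (grid_sum f g a b)"
  proof (rule metric_CauchyI)
    fix e :: real assume "e > 0"
    define \<eta> where "\<eta> = e / 4 / (V + 1)"
    have "\<eta> > 0" "\<eta> * V < e / 4"
      unfolding \<eta>_def using divide_add_one_mult_less[of V "e / 4"] \<open>e > 0\<close> \<open>V \<ge> 0\<close> by auto
    obtain \<delta> where "\<delta> > 0" and osc: "\<forall>u\<in>{a..b}. \<forall>v\<in>{a..b}. \<bar>u - v\<bar> < \<delta> \<longrightarrow> \<bar>f u - f v\<bar> \<le> \<eta>"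
      using continuous_on_interval_modulus[OF f \<open>\<eta> > 0\<close>] by blast
    obtain K where K: "fine_tagged a b \<delta> K (grid a b K) (grid a b K)"
      using eventually_happens'[OF sequentially_bot eventually_fine_tagged_grid[OF ab \<open>\<delta> > 0\<close>]] by blast
    have "eventually (\<lambda>N. \<bar>grid_sum f g a b N - grid_sum f g a b K\<bar> \<le> \<eta> * V + e / 4) sequentially"
      using grid_sum_near_rsum[OF ab g W osc K, of "e / 4"] \<open>e > 0\<close> by (simp add: grid_sum_def V_def)
    then obtain N0 where N0: "\<And>N. N \<ge> N0 \<Longrightarrow> \<bar>grid_sum f g a b N - grid_sum f g a b K\<bar> \<le> \<eta> * V + e / 4"
      unfolding eventually_sequentially by blast
    show "\<exists>N0. \<forall>m\<ge>N0. \<forall>n\<ge>N0. dist (grid_sum f g a b m) (grid_sum f g a b n) < e"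
    proof (intro exI allI impI)
      fix m n assume "N0 \<le> m" "N0 \<le> n"
      then have "\<bar>grid_sum f g a b m - grid_sum f g a b K\<bar> \<le> \<eta> * V + e / 4"
        "\<bar>grid_sum f g a b n - grid_sum f g a b K\<bar> \<le> \<eta> * V + e / 4"
        using N0 by auto
      then show "dist (grid_sum f g a b m) (grid_sum f g a b n) < e"
        unfolding dist_real_def using \<open>\<eta> * V < e / 4\<close> by linarith
    qed
  qed
  then show ?thesis by (simp add: Cauchy_convergent_iff)
qed

lemma rsum_near_grid_limit:
  assumes ab: "a < b" and f: "continuous_on {a..b} f" and g: "continuous_on {a..b} g"
    and W: "controls W g a b"
    and osc: "\<forall>u\<in>{a..b}. \<forall>v\<in>{a..b}. \<bar>u - v\<bar> < \<delta> \<longrightarrow> \<bar>f u - f v\<bar> \<le> \<eta>"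
    and P: "fine_tagged a b \<delta> n t s"
  shows "\<bar>rsum f g n t s - lim (grid_sum f g a b)\<bar> \<le> \<eta> * (W b - W a)"
proof (rule field_le_epsilon)
  fix e :: real assume "e > 0"
  have "grid_sum f g a b \<longlonglongrightarrow> lim (grid_sum f g a b)"
    using convergent_grid_sum[OF ab f g W] by (simp add: convergent_LIMSEQ_iff)
  then have "(\<lambda>N. \<bar>grid_sum f g a b N - rsum f g n t s\<bar>) \<longlonglongrightarrow> \<bar>lim (grid_sum f g a b) - rsum f g n t s\<bar>"
    by (intro tendsto_intros)
  then have "\<bar>lim (grid_sum f g a b) - rsum f g n t s\<bar> \<le> \<eta> * (W b - W a) + e"
    by (rule tendsto_upperbound) (use grid_sum_near_rsum[OF ab g W osc P \<open>e > 0\<close>] in simp_all)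
  then show "\<bar>rsum f g n t s - lim (grid_sum f g a b)\<bar> \<le> \<eta> * (W b - W a) + e"
    by (simp add: abs_minus_commute)
qed

lemma has_RS_grid_limit:
  assumes ab: "a < b" and f: "continuous_on {a..b} f" and g: "continuous_on {a..b} g"
    and W: "controls W g a b"
  shows "has_RS f g a b (lim (grid_sum f g a b))"
  unfolding has_RS_iff_rsum
proof (intro allI impI)
  fix e :: real assume "e > 0"
  define \<eta> where "\<eta> = e / (W b - W a + 1)"
  have "W a \<le> W b" using controls_mono[OF W, of a b] ab by simp
  then have "\<eta> > 0" "\<eta> * (W b - W a) < e"
    unfolding \<eta>_def using divide_add_one_mult_less[of "W b - W a" e] \<open>e > 0\<close> by auto
  obtain \<delta> where "\<delta> > 0" and osc: "\<forall>u\<in>{a..b}. \<forall>v\<in>{a..b}. \<bar>u - v\<bar> < \<delta> \<longrightarrow> \<bar>f u - f v\<bar> \<le> \<eta>"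
    using continuous_on_interval_modulus[OF f \<open>\<eta> > 0\<close>] by blast
  show "\<exists>\<delta>>0. \<forall>n t s. fine_tagged a b \<delta> n t s \<longrightarrow> \<bar>rsum f g n t s - lim (grid_sum f g a b)\<bar> < e"
    using \<open>\<delta> > 0\<close> rsum_near_grid_limit[OF ab f g W osc] \<open>\<eta> * (W b - W a) < e\<close>
    by (meson le_less_trans)
qed

lemma has_RS_unique:
  assumes ab: "a < b" and L: "has_RS f g a b L" and L': "has_RS f g a b L'"
  shows "L = L'"
proof -
  have "\<bar>L - L'\<bar> < 2 * e" if "e > 0" for e
  proof -
    obtain \<delta> where "\<delta> > 0" and \<delta>: "\<forall>n t s. fine_tagged a b \<delta> n t s \<longrightarrow> \<bar>rsum f g n t s - L\<bar> < e"
      using L \<open>e > 0\<close> unfolding has_RS_iff_rsum by blast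
    obtain \<delta>' where "\<delta>' > 0" and \<delta>': "\<forall>n t s. fine_tagged a b \<delta>' n t s \<longrightarrow> \<bar>rsum f g n t s - L'\<bar> < e"
      using L' \<open>e > 0\<close> unfolding has_RS_iff_rsum by blast
    have "min \<delta> \<delta>' > 0" using \<open>\<delta> > 0\<close> \<open>\<delta>' > 0\<close> by simp
    then obtain N where "fine_tagged a b (min \<delta> \<delta>') N (grid a b N) (grid a b N)"
      using eventually_happens'[OF sequentially_bot eventually_fine_tagged_grid[OF ab]] by blast
    then have "fine_tagged a b \<delta> N (grid a b N) (grid a b N)" "fine_tagged a b \<delta>' N (grid a b N) (grid a b N)"
      unfolding fine_tagged_def by auto
    then show ?thesis using \<delta> \<delta>' by fastforce
  qed
  from this[of "\<bar>L - L'\<bar> / 2"] show "L = L'" by (cases "L = L'") auto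
qed

lemma RS_int_eq_grid_limit:
  assumes "a < b" "continuous_on {a..b} f" "continuous_on {a..b} g" "controls W g a b"
  shows "RS_int f g a b = lim (grid_sum f g a b)"
  unfolding RS_int_def using has_RS_grid_limit[OF assms] has_RS_unique[OF assms(1)] by blast

lemma grid_sum_tendsto_RS_int:
  assumes "a < b" "continuous_on {a..b} f" "continuous_on {a..b} g" "controls W g a b"
  shows "grid_sum f g a b \<longlonglongrightarrow> RS_int f g a b"
  using convergent_grid_sum[OF assms] unfolding RS_int_eq_grid_limit[OF assms]
  by (simp add: convergent_LIMSEQ_iff)

lemma RS_int_same [simp]: "RS_int f g a a = 0"
proof -
  have "has_RS f g a a L \<longleftrightarrow> (\<forall>e>0. \<bar>L\<bar> < e)" for L
    unfolding has_RS_iff_rsum fine_tagged_degenerate by (auto simp: rsum_def)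
  then have "has_RS f g a a L \<longleftrightarrow> L = 0" for L
    by (metis abs_ge_zero abs_zero order_less_irrefl zero_less_abs_iff)
  then show ?thesis unfolding RS_int_def by (intro the_equality) simp_all
qed

lemma rsum_near_RS_int:
  assumes ab: "a \<le> b" and f: "continuous_on {a..b} f" and g: "continuous_on {a..b} g"
    and W: "controls W g a b"
    and osc: "\<forall>u\<in>{a..b}. \<forall>v\<in>{a..b}. \<bar>u - v\<bar> < \<delta> \<longrightarrow> \<bar>f u - f v\<bar> \<le> \<eta>"
    and P: "fine_tagged a b \<delta> n t s"
  shows "\<bar>rsum f g n t s - RS_int f g a b\<bar> \<le> \<eta> * (W b - W a)"
proof (cases "a = b")
  case True
  then show ?thesis using P by (simp add: fine_tagged_degenerate rsum_def)
next
  case False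
  with ab have "a < b" by simp
  then show ?thesis
    using rsum_near_grid_limit[OF _ f g W osc P] RS_int_eq_grid_limit[OF _ f g W] by simp
qed

text \<open>Extending a fine partition of \<open>[a, u]\<close> by the single interval \<open>[u, v]\<close> tagged at \<open>u\<close>
  compares both integrals with one Riemann sum.\<close>

lemma RS_int_increment:
  fixes f g W :: "real \<Rightarrow> real"
  assumes f: "continuous_on {a..b} f" and g: "continuous_on {a..b} g" and W: "controls W g a b"
    and osc: "\<forall>x\<in>{a..b}. \<forall>y\<in>{a..b}. \<bar>x - y\<bar> < \<delta> \<longrightarrow> \<bar>f x - f y\<bar> \<le> \<eta>"
    and uv: "a \<le> u" "u < v" "v \<le> b" "v - u < \<delta>"
  shows "\<bar>RS_int f g a v - RS_int f g a u - f u * (g v - g u)\<bar> \<le> \<eta> * (W u - W a) + \<eta> * (W v - W a)"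
proof -
  have sub: "continuous_on {a..c} f" "continuous_on {a..c} g" "controls W g a c"
    "\<forall>x\<in>{a..c}. \<forall>y\<in>{a..c}. \<bar>x - y\<bar> < \<delta> \<longrightarrow> \<bar>f x - f y\<bar> \<le> \<eta>" if "c \<le> b" for c
    using f g W osc that by (auto intro: continuous_on_subset controls_subinterval)
  obtain n t s where P: "fine_tagged a u \<delta> n t s"
    using fine_tagged_exists[of a u \<delta>] uv by auto
  then have P': "fine_tagged a v \<delta> (Suc n) (t(Suc n := v)) (s(n := u))"
    using fine_tagged_snoc uv by blast
  have "\<bar>rsum f g n t s - RS_int f g a u\<bar> \<le> \<eta> * (W u - W a)"
    using rsum_near_RS_int[OF _ sub P] uv by auto
  moreover have "\<bar>rsum f g n t s + f u * (g v - g u) - RS_int f g a v\<bar> \<le> \<eta> * (W v - W a)"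
    using rsum_near_RS_int[OF _ sub P'] rsum_snoc[of t n u f g v s] P uv by (auto simp: fine_tagged_def)
  ultimately show ?thesis by linarith
qed

lemma abs_RS_int_diff_le:
  fixes f g W :: "real \<Rightarrow> real"
  assumes f: "continuous_on {a..b} f" and g: "continuous_on {a..b} g" and W: "controls W g a b"
    and osc: "\<forall>x\<in>{a..b}. \<forall>y\<in>{a..b}. \<bar>x - y\<bar> < \<delta> \<longrightarrow> \<bar>f x - f y\<bar> \<le> \<eta>"
    and uv: "a \<le> u" "u < v" "v \<le> b" "v - u < \<delta>" and B: "\<forall>x\<in>{a..b}. \<bar>f x\<bar> \<le> B"
  shows "\<bar>RS_int f g a v - RS_int f g a u\<bar> \<le> 2 * \<eta> * (W b - W a) + B * \<bar>g v - g u\<bar>"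
proof -
  have "0 \<le> \<eta>" using osc uv by force
  then have "\<eta> * (W u - W a) \<le> \<eta> * (W b - W a)" "\<eta> * (W v - W a) \<le> \<eta> * (W b - W a)"
    using uv controls_mono[OF W] by (auto intro!: mult_left_mono)
  moreover have "\<bar>f u * (g v - g u)\<bar> \<le> B * \<bar>g v - g u\<bar>"
    unfolding abs_mult using B uv by (intro mult_right_mono) auto
  ultimately show ?thesis
    using RS_int_increment[OF f g W osc uv(1-4)] by linarith
qed

lemma continuous_on_RS_int:
  fixes f g W :: "real \<Rightarrow> real"
  assumes f: "continuous_on {a..b} f" and g: "continuous_on {a..b} g" and W: "controls W g a b"
  shows "continuous_on {a..b} (\<lambda>t. RS_int f g a t)"
  unfolding continuous_on_iff
proof (intro ballI allI impI)
  fix t0 e :: real assume t0: "t0 \<in> {a..b}" and "e > 0"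
  define V where "V = W b - W a"
  have "V \<ge> 0" unfolding V_def using controls_mono[OF W, of a b] t0 by simp
  obtain B where B: "\<forall>x\<in>{a..b}. \<bar>f x\<bar> \<le> B" and "0 \<le> B"
    using compact_imp_bounded[OF compact_continuous_image[OF f compact_Icc]]
    unfolding bounded_iff by (metis (full_types) abs_ge_zero image_eqI order.trans real_norm_def)
  define \<eta> where "\<eta> = e / 4 / (V + 1)"
  have "\<eta> > 0" "\<eta> * V < e / 4"
    unfolding \<eta>_def using divide_add_one_mult_less[of V "e / 4"] \<open>e > 0\<close> \<open>V \<ge> 0\<close> by auto
  obtain \<delta> where "\<delta> > 0" and osc: "\<forall>x\<in>{a..b}. \<forall>y\<in>{a..b}. \<bar>x - y\<bar> < \<delta> \<longrightarrow> \<bar>f x - f y\<bar> \<le> \<eta>"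
    using continuous_on_interval_modulus[OF f \<open>\<eta> > 0\<close>] by blast
  define c where "c = e / 2 / (B + 1)"
  have "c > 0" "c * B < e / 2"
    unfolding c_def using divide_add_one_mult_less[of B "e / 2"] \<open>e > 0\<close> \<open>0 \<le> B\<close> by auto
  obtain d where "d > 0" and d: "\<forall>x\<in>{a..b}. \<bar>x - t0\<bar> < d \<longrightarrow> \<bar>g x - g t0\<bar> < c"
    using g t0 \<open>c > 0\<close> unfolding continuous_on_iff dist_real_def by blast
  have "\<bar>RS_int f g a x - RS_int f g a t0\<bar> < e" if x: "x \<in> {a..b}" "\<bar>x - t0\<bar> < min \<delta> d" for x
  proof (cases "x = t0")
    case False
    define u v where "u = min x t0" and "v = max x t0"
    have "\<bar>x - t0\<bar> < \<delta>" "\<bar>g x - g t0\<bar> < c" using x d by auto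
    then have uv: "a \<le> u" "u < v" "v \<le> b" "v - u < \<delta>" and "\<bar>g v - g u\<bar> < c"
      using x t0 False unfolding u_def v_def by (auto simp: min_def max_def abs_minus_commute)
    then have "B * \<bar>g v - g u\<bar> \<le> B * c" using \<open>0 \<le> B\<close> by (intro mult_left_mono) auto
    then have "\<bar>RS_int f g a v - RS_int f g a u\<bar> \<le> 2 * \<eta> * V + B * c"
      using abs_RS_int_diff_le[OF f g W osc uv B] unfolding V_def by linarith
    also have "\<dots> < e" using \<open>\<eta> * V < e / 4\<close> \<open>c * B < e / 2\<close> by (simp add: mult.commute)
    finally show ?thesis
      unfolding u_def v_def by (cases "x \<le> t0") (simp_all add: abs_minus_commute max_def min_def)
  qed (use \<open>e > 0\<close> in simp)
  then show "\<exists>d>0. \<forall>x\<in>{a..b}. dist x t0 < d \<longrightarrow> dist (RS_int f g a x) (RS_int f g a t0) < e"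
    using \<open>\<delta> > 0\<close> \<open>d > 0\<close> unfolding dist_real_def by (intro exI[of _ "min \<delta> d"]) auto
qed

lemma exp_increment_le: "x \<le> y \<Longrightarrow> exp x * (y - x) \<le> exp y - exp (x::real)"
proof -
  assume "x \<le> y"
  have "exp x * (1 + (y - x)) \<le> exp x * exp (y - x)"
    using exp_ge_add_one_self[of "y - x"] by (intro mult_left_mono) auto
  then show ?thesis by (simp add: exp_diff algebra_simps)
qed

lemma grid_sum_exp_bound:
  fixes f g W :: "real \<Rightarrow> real"
  assumes ab: "a \<le> b" and W: "controls W g a b" and fW: "\<And>s. s \<in> {a..b} \<Longrightarrow> \<bar>f s\<bar> \<le> exp (W s)"
  shows "\<bar>grid_sum f g a b N\<bar> \<le> exp (W b) - exp (W a)"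
proof (cases "N = 0")
  case True
  then show ?thesis using controls_mono[OF W, of a b] ab by (simp add: grid_sum_def rsum_def)
next
  case False
  let ?p = "grid a b N"
  have "\<bar>grid_sum f g a b N\<bar> \<le> (\<Sum>k<N. \<bar>f (?p k)\<bar> * \<bar>g (?p (Suc k)) - g (?p k)\<bar>)"
    unfolding grid_sum_def rsum_def abs_mult[symmetric] by (rule sum_abs)
  also have "\<dots> \<le> (\<Sum>k<N. exp (W (?p (Suc k))) - exp (W (?p k)))"
  proof (rule sum_mono)
    fix k assume "k \<in> {..<N}"
    then have p: "?p k \<in> {a..b}" "?p (Suc k) \<in> {a..b}" "?p k \<le> ?p (Suc k)"
      using grid_in[OF ab] grid_mono[OF ab] by auto
    then have "\<bar>f (?p k)\<bar> * \<bar>g (?p (Suc k)) - g (?p k)\<bar> \<le> exp (W (?p k)) * (W (?p (Suc k)) - W (?p k))"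
      by (intro mult_mono fW controlsD[OF W]) auto
    also have "\<dots> \<le> exp (W (?p (Suc k))) - exp (W (?p k))"
      using p by (intro exp_increment_le controls_mono[OF W]) auto
    finally show "\<bar>f (?p k)\<bar> * \<bar>g (?p (Suc k)) - g (?p k)\<bar> \<le> exp (W (?p (Suc k))) - exp (W (?p k))" .
  qed
  also have "\<dots> = exp (W b) - exp (W a)"
    using False sum_lessThan_telescope[of "\<lambda>k. exp (W (?p k))" N] by simp
  finally show ?thesis .
qed

lemma RS_int_exp_bound:
  fixes f g W :: "real \<Rightarrow> real"
  assumes ab: "a \<le> b" and f: "continuous_on {a..b} f" and g: "continuous_on {a..b} g"
    and W: "controls W g a b" and fW: "\<And>s. s \<in> {a..b} \<Longrightarrow> \<bar>f s\<bar> \<le> exp (W s)"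
  shows "\<bar>RS_int f g a b\<bar> \<le> exp (W b) - exp (W a)"
proof (cases "a = b")
  case False
  with ab have "a < b" by simp
  show ?thesis
    using grid_sum_tendsto_RS_int[OF \<open>a < b\<close> f g W] grid_sum_exp_bound[OF ab W fW]
    by (intro tendsto_upperbound[where f = "\<lambda>N. \<bar>grid_sum f g a b N\<bar>"] tendsto_rabs) auto
qed simp

section \<open>Total variation and bounds on the signature\<close>

lemma tv_partition_le:
  assumes "t 0 = a" "t n = b" "\<forall>i<n. t i \<le> t (Suc i)"
  shows "ereal (\<Sum>i<n. norm (f (t (Suc i)) - f (t i))) \<le> tv a b f"
  unfolding tv_def using assms by (intro SUP_upper2[of "(n, t)"]) auto

lemma tv_nonneg:
  assumes "a \<le> b" shows "0 \<le> tv a b f"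
proof -
  have "ereal (norm (f b - f a)) \<le> tv a b f"
    using tv_partition_le[of "\<lambda>i. if i = 0 then a else b" a 1 b f] assms by simp
  then show ?thesis by (rule order_trans[rotated]) simp
qed

lemma tv_increment:
  fixes f :: "real \<Rightarrow> 'a::real_normed_vector"
  assumes au: "a \<le> u" and uv: "u \<le> v"
  shows "tv a u f + ereal (norm (f v - f u)) \<le> tv a v f"
proof (cases "tv a v f = \<infinity>")
  case False
  then obtain V where V: "tv a v f = ereal V"
    using tv_nonneg[of a v f] au uv by (cases "tv a v f") auto
  have "tv a u f \<le> ereal (V - norm (f v - f u))"
    unfolding tv_def[of a u]
  proof (rule SUP_least)
    fix nt assume "nt \<in> {(n, t). t 0 = a \<and> t n = u \<and> (\<forall>i<n. t i \<le> t (Suc i))}"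
    then obtain n t where nt: "nt = (n, t)" and t: "t 0 = a" "t n = u" "\<forall>i<n. t i \<le> t (Suc i)"
      by auto
    let ?t = "t(Suc n := v)"
    have "ereal (\<Sum>i<Suc n. norm (f (?t (Suc i)) - f (?t i))) \<le> tv a v f"
      using t uv by (intro tv_partition_le) (auto simp: less_Suc_eq)
    then show "ereal (\<Sum>i<fst nt. norm (f (snd nt (Suc i)) - f (snd nt i))) \<le> ereal (V - norm (f v - f u))"
      using nt t V by simp
  qed
  moreover have "0 \<le> tv a u f" using tv_nonneg[OF au] .
  ultimately show ?thesis using V by (cases "tv a u f") auto
qed simp

lemma tv_mono:
  fixes f :: "real \<Rightarrow> 'a::real_normed_vector"
  assumes "a \<le> u" "u \<le> v"
  shows "tv a u f \<le> tv a v f"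
proof -
  have "tv a u f \<le> tv a u f + ereal (norm (f v - f u))"
    by (cases "tv a u f") auto
  then show ?thesis using tv_increment[OF assms] by (rule order_trans)
qed

lemma tv_real_increment:
  fixes f :: "real \<Rightarrow> 'a::real_normed_vector"
  assumes "a \<le> u" "u \<le> v" "tv a v f < \<infinity>"
  shows "real_of_ereal (tv a u f) + norm (f v - f u) \<le> real_of_ereal (tv a v f)"
proof -
  have "tv a u f \<noteq> \<infinity>" "tv a u f \<noteq> - \<infinity>" "tv a v f \<noteq> - \<infinity>"
    using tv_mono[of a u v f] tv_nonneg[of a u f] tv_nonneg[of a v f] assms by auto
  then show ?thesis
    using tv_increment[OF assms(1,2), of f] assms(3) by (cases "tv a u f"; cases "tv a v f") auto
qed

definition path_control :: "(real \<Rightarrow> real^'m) \<Rightarrow> real \<Rightarrow> real" where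
  "path_control x t = real_of_ereal (tv 0 t x) + t"

lemma path_control_nonneg: "0 \<le> t \<Longrightarrow> 0 \<le> path_control x t"
  unfolding path_control_def using tv_nonneg[of 0 t x] by (simp add: real_of_ereal_pos)

lemma path_control_le:
  assumes "tv 0 T x < ereal C" "0 \<le> T"
  shows "path_control x T \<le> C + T"
  using assms tv_nonneg[of 0 T x] unfolding path_control_def by (cases "tv 0 T x") auto

lemma controls_aug:
  fixes x :: "real \<Rightarrow> real^'m"
  assumes fin: "tv 0 T x < \<infinity>"
  shows "controls (path_control x) (aug x j) 0 T"
  unfolding controls_def
proof (intro allI impI)
  fix u v assume uv: "0 \<le> u" "u \<le> v" "v \<le> T"
  have "tv 0 v x < \<infinity>" using tv_mono[of 0 v T x] uv fin by auto
  then have incr: "real_of_ereal (tv 0 u x) + norm (x v - x u) \<le> real_of_ereal (tv 0 v x)"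
    using tv_real_increment uv by blast
  have "\<bar>aug x j v - aug x j u\<bar> \<le> norm (x v - x u) + (v - u)"
  proof (cases j)
    case (Some i)
    then show ?thesis using component_le_norm_cart[of "x v - x u" i] uv by (simp add: aug_def)
  qed (use uv in \<open>simp add: aug_def\<close>)
  then show "\<bar>aug x j v - aug x j u\<bar> \<le> path_control x v - path_control x u"
    using incr unfolding path_control_def by linarith
qed

lemma continuous_on_aug: "continuous_on S x \<Longrightarrow> continuous_on S (aug x j)"
  unfolding aug_def by (cases j) (auto intro: continuous_on_component continuous_on_id)

lemma itint_aug_continuous_exp_bound:
  fixes x :: "real \<Rightarrow> real^'m"
  assumes x: "continuous_on {0..T} x" and fin: "tv 0 T x < \<infinity>"
  shows "continuous_on {0..T} (itint (aug x) J) \<and>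
    (\<forall>t\<in>{0..T}. \<bar>itint (aug x) J t\<bar> \<le> exp (path_control x t))"
proof (induction J)
  case Nil
  show ?case by (auto simp: path_control_nonneg)
next
  case (Cons i J)
  let ?f = "itint (aug x) J" and ?g = "aug x i" and ?W = "path_control x"
  have f: "continuous_on {0..T} ?f" and fW: "\<forall>t\<in>{0..T}. \<bar>?f t\<bar> \<le> exp (?W t)"
    using Cons.IH by auto
  have g: "continuous_on {0..T} ?g" and W: "controls ?W ?g 0 T"
    using continuous_on_aug[OF x] controls_aug[OF fin] by auto
  have "\<bar>RS_int ?f ?g 0 t\<bar> \<le> exp (?W t)" if "t \<in> {0..T}" for t
  proof -
    have "\<bar>RS_int ?f ?g 0 t\<bar> \<le> exp (?W t) - exp (?W 0)"
      using that f g W fW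
      by (intro RS_int_exp_bound) (auto intro: continuous_on_subset controls_subinterval)
    then show ?thesis using exp_gt_zero[of "?W 0"] by linarith
  qed
  then show ?case using continuous_on_RS_int[OF f g W] by simp
qed

text \<open>\<open>itint_lim\<close> agrees with the iterated integrals on continuous paths of bounded variation
  (\<open>itint_lim_eq_itint\<close>), but as a pointwise limit of grid sums it is measurable for the
  cylinder \<open>\<sigma>\<close>-algebra on all paths.\<close>

fun itint_lim :: "'m option list \<Rightarrow> (real \<Rightarrow> real^'m) \<Rightarrow> real \<Rightarrow> real" where
  "itint_lim [] x t = 1"
| "itint_lim (i # J) x t = lim (grid_sum (itint_lim J x) (aug x i) 0 t)"

lemma grid_sum_cong:
  assumes "a \<le> b" "\<And>s. s \<in> {a..b} \<Longrightarrow> f s = f' s"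
  shows "grid_sum f g a b N = grid_sum f' g a b N"
  unfolding grid_sum_def rsum_def
proof (intro sum.cong refl)
  fix k assume "k \<in> {..<N}"
  then have "grid a b N k \<in> {a..b}" using grid_in[OF assms(1)] by simp
  then show "f (grid a b N k) * (g (grid a b N (Suc k)) - g (grid a b N k))
      = f' (grid a b N k) * (g (grid a b N (Suc k)) - g (grid a b N k))"
    using assms(2) by simp
qed

lemma grid_sum_same [simp]: "grid_sum f g a a N = 0"
  unfolding grid_sum_def rsum_def grid_def by simp

lemma itint_lim_eq_itint:
  fixes x :: "real \<Rightarrow> real^'m"
  assumes x: "continuous_on {0..T} x" and fin: "tv 0 T x < \<infinity>" and "t \<in> {0..T}"
  shows "itint_lim J x t = itint (aug x) J t"
  using assms(3)
proof (induction J arbitrary: t)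
  case (Cons i J)
  show ?case
  proof (cases "t = 0")
    case True
    then have "grid_sum (itint_lim J x) (aug x i) 0 t = (\<lambda>_. 0)" by (simp add: fun_eq_iff)
    then show ?thesis using \<open>t = 0\<close> by (simp add: limI[OF tendsto_const])
  next
    case False
    with Cons.prems have "0 < t" by simp
    have "grid_sum (itint_lim J x) (aug x i) 0 t = grid_sum (itint (aug x) J) (aug x i) 0 t"
      using Cons by (intro ext grid_sum_cong) auto
    moreover have "grid_sum (itint (aug x) J) (aug x i) 0 t \<longlonglongrightarrow> RS_int (itint (aug x) J) (aug x i) 0 t"
      using itint_aug_continuous_exp_bound[OF x fin, of J] continuous_on_aug[OF x, of i]
        controls_aug[OF fin, of i] Cons.prems
      by (intro grid_sum_tendsto_RS_int[OF \<open>0 < t\<close>])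
         (auto intro: continuous_on_subset controls_subinterval)
    ultimately show ?thesis by (simp add: limI)
  qed
qed simp

lemma borel_measurable_aug:
  "(\<lambda>x. aug x i t) \<in> borel_measurable (Pi\<^sub>M UNIV (\<lambda>_. borel :: (real^'m) measure))"
proof (cases i)
  case (Some j)
  have eval: "(\<lambda>x::real \<Rightarrow> real^'m. x t) \<in> borel_measurable (Pi\<^sub>M UNIV (\<lambda>_. borel))"
    by (rule measurable_component_singleton) simp
  have comp: "(\<lambda>v::real^'m. v $ j) \<in> borel_measurable borel"
    by (intro borel_measurable_continuous_onI continuous_on_component continuous_on_id)
  show ?thesis unfolding aug_def Some using measurable_compose[OF eval comp] by simp
qed (simp add: aug_def)

lemma borel_measurable_itint_lim:
  "(\<lambda>x. itint_lim J x t) \<in> borel_measurable (Pi\<^sub>M UNIV (\<lambda>_. borel :: (real^'m) measure))"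
proof (induction J arbitrary: t)
  case (Cons i J)
  have "(\<lambda>x. grid_sum (itint_lim J x) (aug x i) 0 t N) \<in> borel_measurable (Pi\<^sub>M UNIV (\<lambda>_. borel))" for N
    unfolding grid_sum_def rsum_def
    by (intro borel_measurable_sum borel_measurable_times borel_measurable_diff Cons.IH borel_measurable_aug)
  then show ?case unfolding itint_lim.simps by (rule borel_measurable_lim_metric)
qed simp

lemma sig_eq_itint_lim:
  "continuous_on {0..T} x \<Longrightarrow> tv 0 T x < \<infinity> \<Longrightarrow> 0 \<le> T \<Longrightarrow> sig T x I = itint_lim (rev I) x T"
  unfolding sig_def by (simp add: itint_lim_eq_itint)

lemma abs_sig_le:
  assumes x: "continuous_on {0..T} x" and "tv 0 T x < ereal C" "0 \<le> T"
  shows "\<bar>sig T x I\<bar> \<le> exp (C + T)"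
proof -
  have "tv 0 T x < \<infinity>" using assms(2) by (cases "tv 0 T x") auto
  then have "\<bar>sig T x I\<bar> \<le> exp (path_control x T)"
    using itint_aug_continuous_exp_bound[OF x] \<open>0 \<le> T\<close> unfolding sig_def by auto
  also have "\<dots> \<le> exp (C + T)" using path_control_le[OF assms(2,3)] by simp
  finally show ?thesis .
qed

section \<open>Nets of the \<open>\<ell>\<^sup>1\<close> ball\<close>

definition l1_dist :: "'j set \<Rightarrow> ('j \<Rightarrow> real) \<Rightarrow> ('j \<Rightarrow> real) \<Rightarrow> real" where
  "l1_dist A a b = (\<Sum>j\<in>A. \<bar>a j - b j\<bar>)"

lemma l1_dist_triangle: "l1_dist A a c \<le> l1_dist A a b + l1_dist A b c"
  unfolding l1_dist_def sum.distrib[symmetric] by (intro sum_mono) linarith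

lemma l1_dist_commute: "l1_dist A a b = l1_dist A b a"
  unfolding l1_dist_def by (simp add: abs_minus_commute)

definition int_l1_ball :: "'j set \<Rightarrow> nat \<Rightarrow> ('j \<Rightarrow> int) set" where
  "int_l1_ball A R = {m. (\<forall>j. j \<notin> A \<longrightarrow> m j = 0) \<and> (\<Sum>j\<in>A. \<bar>m j\<bar>) \<le> int R}"

lemma int_l1_ball_insert_subset:
  assumes "finite A" "a \<notin> A"
  shows "int_l1_ball (insert a A) R \<subseteq>
    (\<lambda>(s, k, m). m(a := if s then int k else - int k)) ` (SIGMA s:UNIV. SIGMA k:{..R}. int_l1_ball A (R - k))"
proof
  fix m assume m: "m \<in> int_l1_ball (insert a A) R"
  define k where "k = nat \<bar>m a\<bar>"
  have sum_A: "(\<Sum>j\<in>A. \<bar>(m(a := 0)) j\<bar>) = (\<Sum>j\<in>A. \<bar>m j\<bar>)"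
    using assms(2) by (intro sum.cong) auto
  have bound: "\<bar>m a\<bar> + (\<Sum>j\<in>A. \<bar>m j\<bar>) \<le> int R"
    using m assms unfolding int_l1_ball_def by simp
  moreover have "0 \<le> (\<Sum>j\<in>A. \<bar>m j\<bar>)" by (simp add: sum_nonneg)
  ultimately have "\<bar>m a\<bar> \<le> int R" by linarith
  then have kR: "k \<le> R" unfolding k_def by (simp add: nat_le_iff)
  then have "(\<Sum>j\<in>A. \<bar>(m(a := 0)) j\<bar>) \<le> int (R - k)"
    using bound sum_A unfolding k_def by simp
  moreover have "(m(a := 0)) j = 0" if "j \<notin> A" for j
    using m that unfolding int_l1_ball_def by auto
  ultimately have "m(a := 0) \<in> int_l1_ball A (R - k)"
    unfolding int_l1_ball_def by auto
  moreover have "m = (m(a := 0))(a := if 0 \<le> m a then int k else - int k)"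
    unfolding k_def by auto
  ultimately show "m \<in> (\<lambda>(s, k, m). m(a := if s then int k else - int k)) `
      (SIGMA s:UNIV. SIGMA k:{..R}. int_l1_ball A (R - k))"
    using kR by (intro image_eqI[where x = "(0 \<le> m a, k, m(a := 0))"]) auto
qed

lemma sum_pow2_rev_less: "(\<Sum>k\<le>R. (2::nat) ^ (R - k)) < 2 ^ Suc R"
proof -
  have "(\<Sum>k\<le>R. (2::nat) ^ (R - k)) = (\<Sum>k\<in>{0..<Suc R}. 2 ^ k)"
    using sum.atLeastAtMost_rev[of "\<lambda>k. (2::nat) ^ k" 0 R]
    by (simp add: atMost_atLeast0 atLeastLessThanSuc_atLeastAtMost)
  also have "\<dots> = 2 ^ Suc R - 1" by (rule sum_power2)
  finally show ?thesis by simp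
qed

lemma card_int_l1_ball:
  "finite A \<Longrightarrow> finite (int_l1_ball A R) \<and> card (int_l1_ball A R) \<le> 2 ^ (R + 2 * card A)"
proof (induction A arbitrary: R rule: finite_induct)
  case empty
  have ball: "int_l1_ball {} R = {\<lambda>_. 0}" unfolding int_l1_ball_def by auto
  show ?case unfolding ball by (simp add: Suc_le_eq)
next
  case (insert a A)
  define S where "S = (SIGMA s:(UNIV :: bool set). SIGMA k:{..R}. int_l1_ball A (R - k))"
  have fin: "finite S" unfolding S_def using insert.IH by (auto intro!: finite_SigmaI)
  have "card S = 2 * (\<Sum>k\<le>R. card (int_l1_ball A (R - k)))"
    unfolding S_def using insert.IH by (simp add: card_SigmaI)
  also have "\<dots> \<le> 2 * (\<Sum>k\<le>R. 2 ^ (2 * card A) * 2 ^ (R - k))"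
    using insert.IH by (intro mult_left_mono sum_mono) (auto simp: power_add mult.commute)
  also have "\<dots> \<le> 2 * (2 ^ (2 * card A) * 2 ^ Suc R)"
    using sum_pow2_rev_less[of R] by (simp add: sum_distrib_left[symmetric])
  also have "\<dots> = 2 ^ (R + 2 * card (insert a A))"
    using insert by (simp add: power_add)
  finally have "card S \<le> 2 ^ (R + 2 * card (insert a A))" .
  moreover have "int_l1_ball (insert a A) R \<subseteq> (\<lambda>(s, k, m). m(a := if s then int k else - int k)) ` S"
    unfolding S_def by (rule int_l1_ball_insert_subset[OF insert(1,2)])
  ultimately show ?case
    using fin by (meson card_image_le card_mono finite_imageI finite_subset order_trans)
qed

definition trunc_int :: "real \<Rightarrow> int" where
  "trunc_int x = (if 0 \<le> x then \<lfloor>x\<rfloor> else \<lceil>x\<rceil>)"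

lemma abs_trunc_int_le: "\<bar>real_of_int (trunc_int x)\<bar> \<le> \<bar>x\<bar>"
  using of_int_floor_le[of x] le_of_int_ceiling[of x]
  unfolding trunc_int_def by (cases "0 \<le> x") (simp_all add: abs_le_iff)

lemma abs_diff_trunc_int_le: "\<bar>x - real_of_int (trunc_int x)\<bar> \<le> 1"
  using of_int_floor_le[of x] le_of_int_ceiling[of x] real_of_int_floor_ge_diff_one[of x]
    of_int_ceiling_diff_one_le[of x]
  unfolding trunc_int_def abs_le_iff by (cases "0 \<le> x") (simp_all, linarith+)

definition net_mesh :: "'j set \<Rightarrow> real \<Rightarrow> nat \<Rightarrow> real" where
  "net_mesh A r k = r / (2 ^ k * card A)"

text \<open>Level 0 of the nets is the origin, so every chain starts where the deviation vanishes.\<close>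

definition l1_net :: "'j set \<Rightarrow> real \<Rightarrow> nat \<Rightarrow> ('j \<Rightarrow> real) set" where
  "l1_net A r k = (if k = 0 then {\<lambda>_. 0}
     else (\<lambda>m j. net_mesh A r k * m j) ` int_l1_ball A (card A * 2 ^ k))"

definition l1_net_proj :: "'j set \<Rightarrow> real \<Rightarrow> nat \<Rightarrow> ('j \<Rightarrow> real) \<Rightarrow> ('j \<Rightarrow> real)" where
  "l1_net_proj A r k \<theta> = (if k = 0 then (\<lambda>_. 0)
     else (\<lambda>j. if j \<in> A then net_mesh A r k * trunc_int (\<theta> j / net_mesh A r k) else 0))"

lemma card_l1_net:
  assumes "finite A"
  shows "finite (l1_net A r k) \<and> card (l1_net A r k) \<le> 2 ^ (3 * card A * 2 ^ k)"
proof (cases "k = 0")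
  case False
  let ?R = "card A * 2 ^ k"
  have fin: "finite (int_l1_ball A ?R)" and card: "card (int_l1_ball A ?R) \<le> 2 ^ (?R + 2 * card A)"
    using card_int_l1_ball[OF assms] by auto
  have "card (l1_net A r k) \<le> card (int_l1_ball A ?R)"
    unfolding l1_net_def using False fin by (simp add: card_image_le)
  also have "\<dots> \<le> 2 ^ (3 * card A * 2 ^ k)"
    using card by (rule order_trans) (intro power_increasing, auto)
  finally show ?thesis unfolding l1_net_def using False fin by simp
qed (simp add: l1_net_def)

lemma l1_net_proj:
  assumes "finite A" "A \<noteq> {}" "r > 0" and \<theta>: "(\<Sum>j\<in>A. \<bar>\<theta> j\<bar>) \<le> r"
  shows "l1_net_proj A r k \<theta> \<in> l1_net A r k" and "l1_dist A \<theta> (l1_net_proj A r k \<theta>) \<le> r / 2 ^ k"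
proof -
  have D: "card A > 0" using assms(1,2) by (simp add: card_gt_0_iff)
  have "l1_net_proj A r k \<theta> \<in> l1_net A r k \<and> l1_dist A \<theta> (l1_net_proj A r k \<theta>) \<le> r / 2 ^ k"
  proof (cases "k = 0")
    case False
    define h where "h = net_mesh A r k"
    have h: "h > 0" unfolding h_def net_mesh_def using assms(3) D by simp
    define m where "m j = (if j \<in> A then trunc_int (\<theta> j / h) else 0)" for j
    have proj: "l1_net_proj A r k \<theta> = (\<lambda>j. h * m j)"
      unfolding l1_net_proj_def m_def h_def using False by auto
    have "\<bar>real_of_int (trunc_int (\<theta> j / h))\<bar> \<le> \<bar>\<theta> j\<bar> / h" for j
      using abs_trunc_int_le[of "\<theta> j / h"] h by (simp add: abs_divide)
    then have "real_of_int (\<Sum>j\<in>A. \<bar>m j\<bar>) \<le> (\<Sum>j\<in>A. \<bar>\<theta> j\<bar>) / h"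
      unfolding m_def sum_divide_distrib by (simp add: sum_mono)
    also have "\<dots> \<le> real_of_int (int (card A * 2 ^ k))"
      using \<theta> h D unfolding h_def net_mesh_def by (simp add: field_simps)
    finally have "(\<Sum>j\<in>A. \<bar>m j\<bar>) \<le> int (card A * 2 ^ k)"
      by (simp only: of_int_le_iff)
    then have "m \<in> int_l1_ball A (card A * 2 ^ k)"
      unfolding int_l1_ball_def m_def by auto
    then have "l1_net_proj A r k \<theta> \<in> l1_net A r k"
      unfolding proj l1_net_def h_def using False by auto
    moreover have "l1_dist A \<theta> (l1_net_proj A r k \<theta>) = (\<Sum>j\<in>A. h * \<bar>\<theta> j / h - trunc_int (\<theta> j / h)\<bar>)"
      unfolding l1_dist_def proj
    proof (intro sum.cong refl)
      fix j assume "j \<in> A"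
      have "\<theta> j - h * m j = h * (\<theta> j / h - trunc_int (\<theta> j / h))"
        using h \<open>j \<in> A\<close> unfolding m_def by (simp add: field_simps)
      then show "\<bar>\<theta> j - h * m j\<bar> = h * \<bar>\<theta> j / h - trunc_int (\<theta> j / h)\<bar>"
        using h by (simp add: abs_mult)
    qed
    moreover have "(\<Sum>j\<in>A. h * \<bar>\<theta> j / h - trunc_int (\<theta> j / h)\<bar>) \<le> card A * h"
      using h abs_diff_trunc_int_le sum_mono[of A _ "\<lambda>_. h"] by (simp add: mult_left_le)
    moreover have "card A * h = r / 2 ^ k" unfolding h_def net_mesh_def using D by simp
    ultimately show ?thesis by simp
  qed (use \<theta> in \<open>simp add: l1_net_proj_def l1_net_def l1_dist_def\<close>)
  then show "l1_net_proj A r k \<theta> \<in> l1_net A r k" "l1_dist A \<theta> (l1_net_proj A r k \<theta>) \<le> r / 2 ^ k"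
    by auto
qed

section \<open>Chaining\<close>

definition net_links :: "'j set \<Rightarrow> real \<Rightarrow> nat \<Rightarrow> (('j \<Rightarrow> real) \<times> ('j \<Rightarrow> real)) set" where
  "net_links A r k = {(a, b). a \<in> l1_net A r k \<and> b \<in> l1_net A r (k - 1) \<and> l1_dist A a b \<le> 3 * r / 2 ^ k}"

lemma two_pow_le_exp: "(2::real) ^ m \<le> exp (real m)"
proof -
  have "(2::real) ^ m \<le> exp 1 ^ m"
    using exp_ge_add_one_self[of 1] by (intro power_mono) auto
  then show ?thesis by (simp add: exp_of_nat_mult[symmetric])
qed

lemma card_net_links:
  assumes "finite A"
  shows "finite (net_links A r k) \<and> real (card (net_links A r k)) \<le> exp (6 * card A * 2 ^ k)"
proof -
  let ?D = "card A"
  have sub: "net_links A r k \<subseteq> l1_net A r k \<times> l1_net A r (k - 1)"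
    unfolding net_links_def by auto
  have fin: "finite (l1_net A r k)" "finite (l1_net A r (k - 1))"
    using card_l1_net[OF assms] by auto
  have "card (net_links A r k) \<le> card (l1_net A r k) * card (l1_net A r (k - 1))"
    using card_mono[OF _ sub] fin by (simp add: card_cartesian_product)
  also have "\<dots> \<le> 2 ^ (3 * ?D * 2 ^ k) * 2 ^ (3 * ?D * 2 ^ (k - 1))"
    using card_l1_net[OF assms] by (intro mult_mono) auto
  also have "\<dots> \<le> 2 ^ (3 * ?D * 2 ^ k) * 2 ^ (3 * ?D * 2 ^ k)"
    by (intro mult_left_mono power_increasing) auto
  also have "\<dots> = 2 ^ (6 * ?D * 2 ^ k)"
    by (simp add: power_add[symmetric])
  finally have "real (card (net_links A r k)) \<le> 2 ^ (6 * ?D * 2 ^ k)"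
    by (metis of_nat_le_iff of_nat_numeral of_nat_power)
  also have "\<dots> \<le> exp (6 * ?D * 2 ^ k)"
    using two_pow_le_exp[of "6 * ?D * 2 ^ k"] by simp
  finally show ?thesis using sub fin by (auto intro: finite_subset)
qed

lemma sum_three_quarters_le: "(\<Sum>k<K. (3/4::real) ^ Suc k) \<le> 3"
proof -
  have "(\<Sum>k<K. (3/4::real) ^ Suc k) = 3/4 * (\<Sum>k<K. (3/4) ^ k)"
    by (simp add: sum_distrib_left)
  also have "\<dots> = 3 * (1 - (3/4) ^ K)"
    by (simp add: sum_gp_strict)
  also have "\<dots> \<le> 3" by simp
  finally show ?thesis .
qed

text \<open>The deviation telescopes along the projections of \<open>\<theta>\<close> onto the nets of levels
  \<open>0, \<dots>, K\<close>; the remainder at level \<open>K\<close> is handled by the Lipschitz bound.\<close>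

lemma chaining:
  fixes \<Delta> :: "('j \<Rightarrow> real) \<Rightarrow> real"
  assumes A: "finite A" "A \<noteq> {}" and "r > 0" "0 < K" "0 \<le> L"
    and lip: "\<And>a b. \<bar>\<Delta> a - \<Delta> b\<bar> \<le> L * l1_dist A a b"
    and origin: "\<Delta> (\<lambda>_. 0) = 0"
    and tail: "L * (r / 2 ^ K) \<le> \<epsilon> / 2"
    and links: "\<And>k a b. k \<in> {1..K} \<Longrightarrow> (a, b) \<in> net_links A r k \<Longrightarrow> \<bar>\<Delta> a - \<Delta> b\<bar> < \<epsilon> * (3/4) ^ k / 6"
    and \<theta>: "(\<Sum>j\<in>A. \<bar>\<theta> j\<bar>) \<le> r"
  shows "\<bar>\<Delta> \<theta>\<bar> < \<epsilon>"
proof -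
  define \<pi> where "\<pi> k = l1_net_proj A r k \<theta>" for k
  have \<pi>: "\<pi> k \<in> l1_net A r k" "l1_dist A \<theta> (\<pi> k) \<le> r / 2 ^ k" for k
    unfolding \<pi>_def using l1_net_proj[OF A \<open>r > 0\<close> \<theta>] by auto
  have step: "\<bar>\<Delta> (\<pi> (Suc k)) - \<Delta> (\<pi> k)\<bar> < \<epsilon> * (3/4) ^ Suc k / 6" if "k < K" for k
  proof -
    have "l1_dist A (\<pi> (Suc k)) (\<pi> k) \<le> r / 2 ^ Suc k + r / 2 ^ k"
      using l1_dist_triangle[of A "\<pi> (Suc k)" "\<pi> k" \<theta>] l1_dist_commute[of A "\<pi> (Suc k)" \<theta>] \<pi>[of k] \<pi>[of "Suc k"]
      by linarith
    also have "\<dots> = 3 * r / 2 ^ Suc k" by (simp add: field_simps)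
    finally have "(\<pi> (Suc k), \<pi> k) \<in> net_links A r (Suc k)"
      unfolding net_links_def using \<pi> by auto
    then show ?thesis using links[of "Suc k"] that by simp
  qed
  have "0 \<le> L * (r / 2 ^ K)" using \<open>0 \<le> L\<close> \<open>r > 0\<close> by simp
  with tail have "\<epsilon> \<ge> 0" by linarith
  have "\<Delta> (\<pi> K) = (\<Sum>k<K. \<Delta> (\<pi> (Suc k)) - \<Delta> (\<pi> k))"
    using sum_lessThan_telescope[of "\<lambda>k. \<Delta> (\<pi> k)" K] origin by (simp add: \<pi>_def l1_net_proj_def)
  also have "\<bar>\<dots>\<bar> < (\<Sum>k<K. \<epsilon> * (3/4) ^ Suc k / 6)"
    using step \<open>0 < K\<close> by (intro le_less_trans[OF sum_abs] sum_strict_mono) auto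
  also have "\<dots> = \<epsilon> / 6 * (\<Sum>k<K. (3/4) ^ Suc k)"
    by (simp add: sum_distrib_left)
  also have "\<dots> \<le> \<epsilon> / 6 * 3"
    using sum_three_quarters_le \<open>\<epsilon> \<ge> 0\<close> by (intro mult_left_mono) auto
  finally have "\<bar>\<Delta> (\<pi> K)\<bar> < \<epsilon> / 2" by simp
  moreover have "\<bar>\<Delta> \<theta> - \<Delta> (\<pi> K)\<bar> \<le> \<epsilon> / 2"
    using lip[of \<theta> "\<pi> K"] mult_left_mono[OF \<pi>(2) \<open>0 \<le> L\<close>, of K] tail by linarith
  ultimately show ?thesis by linarith
qed

text \<open>Here \<open>exp (6 D 2\<^sup>k)\<close> bounds the number of links of level \<open>k\<close> (\<open>card_net_links\<close>)
  and \<open>Q (9/4)\<^sup>k / 648\<close> is their Hoeffding exponent (\<open>link_exponent\<close>).\<close>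

lemma chaining_sum_bound:
  fixes Q D :: real
  assumes D: "D \<ge> 1" and Q: "Q \<ge> 20000 * D"
  shows "(\<Sum>k\<in>{1..K}. exp (6 * D * 2 ^ k) * (2 * exp (- (Q * (9/4) ^ k / 648)))) \<le> 2 * exp (- Q / 9216)"
proof -
  have each: "exp (6 * D * 2 ^ k) * (2 * exp (- (Q * (9/4) ^ k / 648))) \<le> 2 * exp (- Q / 9216) * (1/2) ^ k"
    for k :: nat
  proof -
    have "(2::real) ^ k \<le> (9/4) ^ k" by (intro power_mono) auto
    then have "Q * 2 ^ k \<le> Q * (9/4) ^ k" using Q D by (intro mult_left_mono) auto
    moreover have "20000 * D * 2 ^ k \<le> Q * 2 ^ k" using Q by (intro mult_right_mono) auto
    moreover have "Q \<le> Q * 2 ^ k" using Q D by (simp add: mult_le_cancel_left1)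
    moreover have "2 ^ k \<le> D * 2 ^ k" using D by simp
    moreover have "real k \<le> 2 ^ k" using less_exp[of k] by (simp add: of_nat_less_two_power less_imp_le)
    ultimately have "6 * D * 2 ^ k - Q * (9/4) ^ k / 648 \<le> - Q / 9216 + - real k" by linarith
    then have "exp (6 * D * 2 ^ k) * (2 * exp (- (Q * (9/4) ^ k / 648))) \<le> 2 * (exp (- Q / 9216) * exp (- real k))"
      by (simp add: exp_add[symmetric] mult.left_commute)
    also have "exp (- real k) \<le> (1/2) ^ k"
      using two_pow_le_exp[of k] by (simp add: exp_minus power_one_over field_simps)
    finally show ?thesis by (simp add: mult_left_mono)
  qed
  have "(\<Sum>k\<in>{1..K}. exp (6 * D * 2 ^ k) * (2 * exp (- (Q * (9/4) ^ k / 648))))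
      \<le> 2 * exp (- Q / 9216) * (\<Sum>k\<in>{1..K}. (1/2) ^ k)"
    unfolding sum_distrib_left by (intro sum_mono each)
  also have "(\<Sum>k\<in>{1..K}. (1/2::real) ^ k) = 1 - (1/2) ^ K"
    by (induction K) (simp_all add: atLeastAtMostSuc_conv)
  also have "2 * exp (- Q / 9216) * (1 - (1/2) ^ K) \<le> 2 * exp (- Q / 9216)"
    by (intro mult_left_le) auto
  finally show ?thesis .
qed

lemma link_exponent:
  fixes n :: nat and \<epsilon> \<beta> r :: real
  assumes "\<beta> > 0" "r > 0"
  shows "real n * (\<epsilon> * (3/4) ^ k / 6)\<^sup>2 / (2 * (\<beta> * (3 * r / 2 ^ k))\<^sup>2)
       = real n * \<epsilon>\<^sup>2 / (\<beta>\<^sup>2 * r\<^sup>2) * (9/4) ^ k / 648"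
proof -
  have "((3/4::real) ^ k)\<^sup>2 * (2 ^ k)\<^sup>2 = (9/4) ^ k"
    by (simp add: power_mult_distrib[symmetric] power2_eq_square power_mult[symmetric] mult.commute)
  then show ?thesis
    using assms by (simp add: power_mult_distrib power_divide field_simps)
qed

section \<open>Uniform deviation for i.i.d. samples\<close>

lemma (in prob_space) Hoeffding_abs_symmetric:
  fixes Z :: "'i \<Rightarrow> 'a \<Rightarrow> real" and c \<epsilon> :: real
  assumes "finite I" "I \<noteq> {}" "indep_vars (\<lambda>_. borel) Z I"
    and bdd: "\<And>i. i \<in> I \<Longrightarrow> AE \<omega> in M. \<bar>Z i \<omega>\<bar> \<le> c" and "c > 0" "0 \<le> \<epsilon>"
  shows "prob {\<omega>\<in>space M. \<epsilon> \<le> \<bar>(\<Sum>i\<in>I. Z i \<omega>) - (\<Sum>i\<in>I. expectation (Z i))\<bar>}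
           \<le> 2 * exp (- (\<epsilon>\<^sup>2 / (2 * card I * c\<^sup>2)))"
proof -
  have AE: "AE \<omega> in M. Z i \<omega> \<in> {- c..c}" if "i \<in> I" for i
    using bdd[OF that] by eventually_elim (simp add: abs_le_iff)
  interpret Hoeffding_ineq M I Z "\<lambda>_. - c" "\<lambda>_. c" "\<Sum>i\<in>I. expectation (Z i)"
    using assms AE by unfold_locales auto
  have "(\<Sum>i\<in>I. (c - - c)\<^sup>2) > 0" using assms by (intro sum_pos) auto
  then have "prob {\<omega>\<in>space M. \<epsilon> \<le> \<bar>(\<Sum>i\<in>I. Z i \<omega>) - (\<Sum>i\<in>I. expectation (Z i))\<bar>}
      \<le> 2 * exp (-2 * \<epsilon>\<^sup>2 / (\<Sum>i\<in>I. (c - - c)\<^sup>2))"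
    using Hoeffding_ineq_abs_ge[OF \<open>0 \<le> \<epsilon>\<close>] by simp
  also have "-2 * \<epsilon>\<^sup>2 / (\<Sum>i\<in>I. (c - - c)\<^sup>2) = - (\<epsilon>\<^sup>2 / (2 * card I * c\<^sup>2))"
    by (simp add: power2_eq_square field_simps)
  finally show ?thesis .
qed

locale iid_sample = prob_space M for M :: "'w measure" +
  fixes S :: "'s measure" and \<xi> :: "nat \<Rightarrow> 'w \<Rightarrow> 's" and \<xi>\<^sub>0 :: "'w \<Rightarrow> 's"
  assumes measurable_sample0: "\<xi>\<^sub>0 \<in> measurable M S"
    and measurable_sample: "\<And>i. \<xi> i \<in> measurable M S"
    and indep_sample: "indep_vars (\<lambda>_. S) \<xi> UNIV"
    and distr_sample: "\<And>i. distr M S (\<xi> i) = distr M S \<xi>\<^sub>0"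
begin

lemma AE_sample_in:
  assumes G: "G \<in> sets S" and AE: "AE \<omega> in M. \<xi>\<^sub>0 \<omega> \<in> G"
  shows "AE \<omega> in M. \<forall>i. \<xi> i \<omega> \<in> G"
proof -
  have pred: "{w \<in> space S. w \<in> G} \<in> sets S"
    using G sets.sets_into_space[OF G] by (simp add: Int_absorb1 Collect_conj_eq Collect_mem_eq)
  have "AE \<omega> in M. \<xi> i \<omega> \<in> G" for i
  proof -
    have "AE w in distr M S (\<xi> i). w \<in> G"
      unfolding distr_sample using AE_distr_iff[OF measurable_sample0 pred] AE by simp
    then show ?thesis using AE_distr_iff[OF measurable_sample pred] by simp
  qed
  then show ?thesis by (simp add: AE_all_countable)
qed

lemma integral_sample:
  fixes f :: "'s \<Rightarrow> real"
  assumes "f \<in> borel_measurable S"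
  shows "(\<integral>\<omega>. f (\<xi> i \<omega>) \<partial>M) = (\<integral>\<omega>. f (\<xi>\<^sub>0 \<omega>) \<partial>M)"
  using integral_distr[OF measurable_sample assms] integral_distr[OF measurable_sample0 assms]
  by (simp add: distr_sample)

lemma integrable_sample:
  fixes f :: "'s \<Rightarrow> real"
  assumes f: "f \<in> borel_measurable S" and G: "G \<in> sets S" "AE \<omega> in M. \<xi>\<^sub>0 \<omega> \<in> G"
    and bound: "\<And>w. w \<in> G \<Longrightarrow> \<bar>f w\<bar> \<le> B"
  shows "integrable M (\<lambda>\<omega>. f (\<xi>\<^sub>0 \<omega>))"
  using G(2) measurable_compose[OF measurable_sample0 f]
  by (intro integrable_const_bound[where B = B]) (auto elim!: eventually_mono simp: bound)

lemma sample_mean_deviation: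
  fixes f :: "'s \<Rightarrow> real"
  assumes f: "f \<in> borel_measurable S" and G: "G \<in> sets S" "AE \<omega> in M. \<xi>\<^sub>0 \<omega> \<in> G"
    and bound: "\<And>w. w \<in> G \<Longrightarrow> \<bar>f w\<bar> \<le> c" and "0 < c" "0 < n" "0 \<le> t"
  shows "prob {\<omega>\<in>space M. real n * t \<le> \<bar>(\<Sum>i<n. f (\<xi> i \<omega>)) - real n * (\<integral>\<omega>. f (\<xi>\<^sub>0 \<omega>) \<partial>M)\<bar>}
           \<le> 2 * exp (- (real n * t\<^sup>2 / (2 * c\<^sup>2)))"
proof -
  have "AE \<omega> in M. \<bar>f (\<xi> i \<omega>)\<bar> \<le> c" for i
    using AE_sample_in[OF G] by eventually_elim (simp add: bound)
  moreover have "indep_vars (\<lambda>_. borel) (\<lambda>i \<omega>. f (\<xi> i \<omega>)) {..<n}"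
    using indep_vars_compose2[OF indep_sample f] by (rule indep_vars_subset) simp
  ultimately have "prob {\<omega>\<in>space M. real n * t \<le> \<bar>(\<Sum>i<n. f (\<xi> i \<omega>)) - (\<Sum>i<n. expectation (\<lambda>\<omega>. f (\<xi> i \<omega>)))\<bar>}
      \<le> 2 * exp (- ((real n * t)\<^sup>2 / (2 * card {..<n} * c\<^sup>2)))"
    using assms by (intro Hoeffding_abs_symmetric) auto
  moreover have "(\<Sum>i<n. expectation (\<lambda>\<omega>. f (\<xi> i \<omega>))) = real n * (\<integral>\<omega>. f (\<xi>\<^sub>0 \<omega>) \<partial>M)"
    using integral_sample[OF f] by simp
  moreover have "(real n * t)\<^sup>2 / (2 * card {..<n} * c\<^sup>2) = real n * t\<^sup>2 / (2 * c\<^sup>2)"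
    using \<open>0 < n\<close> by (simp add: power2_eq_square)
  ultimately show ?thesis by simp
qed

end

locale l1_lipschitz_sample = iid_sample +
  fixes A :: "'j set" and \<beta> c :: real and \<phi> :: "('j \<Rightarrow> real) \<Rightarrow> 's \<Rightarrow> real" and G :: "'s set"
  assumes finite_A: "finite A" and nonempty_A: "A \<noteq> {}" and pos_\<beta>: "0 < \<beta>"
    and measurable_loss: "\<And>\<theta>. \<phi> \<theta> \<in> borel_measurable S"
    and sets_G: "G \<in> sets S" and AE_G: "AE \<omega> in M. \<xi>\<^sub>0 \<omega> \<in> G"
    and lipschitz_loss: "\<And>w a b. w \<in> G \<Longrightarrow> \<bar>\<phi> a w - \<phi> b w\<bar> \<le> \<beta> * l1_dist A a b"
    and loss_origin: "\<And>w. \<phi> (\<lambda>_. 0) w = c"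
begin

lemma integrable_loss: "integrable M (\<lambda>\<omega>. \<phi> \<theta> (\<xi>\<^sub>0 \<omega>))"
proof (rule integrable_sample[OF measurable_loss sets_G AE_G])
  fix w assume "w \<in> G"
  then show "\<bar>\<phi> \<theta> w\<bar> \<le> \<bar>c\<bar> + \<beta> * l1_dist A \<theta> (\<lambda>_. 0)"
    using lipschitz_loss[of w \<theta> "\<lambda>_. 0"] loss_origin[of w] by linarith
qed

lemma abs_integral_loss_diff_le:
  "\<bar>(\<integral>\<omega>. \<phi> a (\<xi>\<^sub>0 \<omega>) \<partial>M) - (\<integral>\<omega>. \<phi> b (\<xi>\<^sub>0 \<omega>) \<partial>M)\<bar> \<le> \<beta> * l1_dist A a b"
proof -
  let ?d = "\<lambda>\<omega>. \<phi> a (\<xi>\<^sub>0 \<omega>) - \<phi> b (\<xi>\<^sub>0 \<omega>)"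
  have int: "integrable M ?d" by (intro Bochner_Integration.integrable_diff integrable_loss)
  have AE: "AE \<omega> in M. \<bar>?d \<omega>\<bar> \<le> \<beta> * l1_dist A a b"
    using AE_G by eventually_elim (rule lipschitz_loss)
  have "(\<integral>\<omega>. ?d \<omega> \<partial>M) \<le> \<beta> * l1_dist A a b"
    using AE by (intro integral_le_const int) (auto elim: eventually_mono)
  moreover have "- (\<beta> * l1_dist A a b) \<le> (\<integral>\<omega>. ?d \<omega> \<partial>M)"
    using AE by (intro integral_ge_const int) (auto elim: eventually_mono)
  ultimately show ?thesis
    using Bochner_Integration.integral_diff[OF integrable_loss integrable_loss, of a b] by linarith
qed

definition pair_deviation where
  "pair_deviation n a b t = {\<omega>\<in>space M. real n * t \<le>
     \<bar>(\<Sum>i<n. \<phi> a (\<xi> i \<omega>) - \<phi> b (\<xi> i \<omega>)) - real n * ((\<integral>\<omega>. \<phi> a (\<xi>\<^sub>0 \<omega>) \<partial>M) - (\<integral>\<omega>. \<phi> b (\<xi>\<^sub>0 \<omega>) \<partial>M))\<bar>}"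

definition link_deviation where
  "link_deviation n r k t = (\<Union>(a, b)\<in>net_links A r k. pair_deviation n a b t)"

lemma measurable_loss_sample [measurable]: "(\<lambda>\<omega>. \<phi> \<theta> (\<xi> i \<omega>)) \<in> borel_measurable M"
  using measurable_compose[OF measurable_sample measurable_loss] .

lemma sets_pair_deviation: "pair_deviation n a b t \<in> sets M"
  unfolding pair_deviation_def by (intro borel_measurable_le) measurable

lemma sets_link_deviation: "link_deviation n r k t \<in> sets M"
  unfolding link_deviation_def using card_net_links[OF finite_A]
  by (intro sets.finite_UN) (auto simp: split_beta sets_pair_deviation)

lemma prob_pair_deviation:
  assumes "(a, b) \<in> net_links A r k" "0 < r" "0 < n" "0 \<le> t"
  shows "prob (pair_deviation n a b t) \<le> 2 * exp (- (real n * t\<^sup>2 / (2 * (\<beta> * (3 * r / 2 ^ k))\<^sup>2)))"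
proof -
  let ?c = "\<beta> * (3 * r / 2 ^ k)"
  have "\<beta> * l1_dist A a b \<le> ?c"
    using assms(1) pos_\<beta> unfolding net_links_def by (intro mult_left_mono) auto
  then have "\<bar>\<phi> a w - \<phi> b w\<bar> \<le> ?c" if "w \<in> G" for w
    using lipschitz_loss[OF that, of a b] by linarith
  moreover have "0 < ?c" using pos_\<beta> assms by simp
  ultimately show ?thesis
    unfolding pair_deviation_def
    using sample_mean_deviation[OF borel_measurable_diff[OF measurable_loss[of a] measurable_loss[of b]]
        sets_G AE_G, of ?c n t] assms Bochner_Integration.integral_diff[OF integrable_loss integrable_loss, of a b]
    by simp
qed

lemma prob_link_deviation:
  assumes "0 < r" "0 < n" "0 \<le> t"
  shows "prob (link_deviation n r k t)
           \<le> card (net_links A r k) * (2 * exp (- (real n * t\<^sup>2 / (2 * (\<beta> * (3 * r / 2 ^ k))\<^sup>2))))"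
proof -
  have "prob (link_deviation n r k t) \<le> (\<Sum>ab\<in>net_links A r k. prob (case ab of (a, b) \<Rightarrow> pair_deviation n a b t))"
    unfolding link_deviation_def using card_net_links[OF finite_A]
    by (intro measure_UNION_le) (auto simp: split_beta sets_pair_deviation)
  also have "\<dots> \<le> (\<Sum>ab\<in>net_links A r k. 2 * exp (- (real n * t\<^sup>2 / (2 * (\<beta> * (3 * r / 2 ^ k))\<^sup>2))))"
    using prob_pair_deviation[OF _ assms] by (intro sum_mono) auto
  finally show ?thesis by simp
qed

lemma deviation_lt_if_links_small:
  assumes \<omega>: "\<omega> \<in> space M" "\<forall>i. \<xi> i \<omega> \<in> G" and "0 < n" "0 < r" "0 < K"
    and tail: "2 * \<beta> * (r / 2 ^ K) \<le> \<epsilon> / 2"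
    and small: "\<omega> \<notin> (\<Union>k\<in>{1..K}. link_deviation n r k (\<epsilon> * (3/4) ^ k / 6))"
    and \<theta>: "(\<Sum>j\<in>A. \<bar>\<theta> j\<bar>) \<le> r"
  shows "\<bar>(\<Sum>i<n. \<phi> \<theta> (\<xi> i \<omega>)) / n - (\<integral>\<omega>. \<phi> \<theta> (\<xi>\<^sub>0 \<omega>) \<partial>M)\<bar> < \<epsilon>"
proof -
  define \<Delta> where "\<Delta> a = (\<Sum>i<n. \<phi> a (\<xi> i \<omega>)) / n - (\<integral>\<omega>. \<phi> a (\<xi>\<^sub>0 \<omega>) \<partial>M)" for a
  have n_diff: "real n * (\<Delta> a - \<Delta> b) = (\<Sum>i<n. \<phi> a (\<xi> i \<omega>) - \<phi> b (\<xi> i \<omega>))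
      - real n * ((\<integral>\<omega>. \<phi> a (\<xi>\<^sub>0 \<omega>) \<partial>M) - (\<integral>\<omega>. \<phi> b (\<xi>\<^sub>0 \<omega>) \<partial>M))" for a b
    unfolding \<Delta>_def using \<open>0 < n\<close> by (simp add: sum_subtractf field_simps)
  have "\<bar>\<Delta> \<theta>\<bar> < \<epsilon>"
  proof (rule chaining[OF finite_A nonempty_A \<open>0 < r\<close> \<open>0 < K\<close>, where L = "2 * \<beta>" and \<Delta> = \<Delta>])
    fix a b
    have "(\<Sum>i<n. \<bar>\<phi> a (\<xi> i \<omega>) - \<phi> b (\<xi> i \<omega>)\<bar>) \<le> (\<Sum>i<n. \<beta> * l1_dist A a b)"
      using \<omega> lipschitz_loss by (intro sum_mono) blast
    then have "\<bar>\<Sum>i<n. \<phi> a (\<xi> i \<omega>) - \<phi> b (\<xi> i \<omega>)\<bar> \<le> real n * (\<beta> * l1_dist A a b)"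
      by (intro order_trans[OF sum_abs]) simp
    moreover have "\<bar>real n * ((\<integral>\<omega>. \<phi> a (\<xi>\<^sub>0 \<omega>) \<partial>M) - (\<integral>\<omega>. \<phi> b (\<xi>\<^sub>0 \<omega>) \<partial>M))\<bar>
        \<le> real n * (\<beta> * l1_dist A a b)"
      unfolding abs_mult abs_of_nat using abs_integral_loss_diff_le[of a b] by (intro mult_left_mono) auto
    ultimately have "\<bar>real n * (\<Delta> a - \<Delta> b)\<bar> \<le> real n * (\<beta> * l1_dist A a b) + real n * (\<beta> * l1_dist A a b)"
      unfolding n_diff by (intro order_trans[OF abs_triangle_ineq4] add_mono)
    then have "real n * \<bar>\<Delta> a - \<Delta> b\<bar> \<le> real n * (\<beta> * l1_dist A a b + \<beta> * l1_dist A a b)"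
      unfolding abs_mult abs_of_nat distrib_left[symmetric] .
    then show "\<bar>\<Delta> a - \<Delta> b\<bar> \<le> 2 * \<beta> * l1_dist A a b"
      using \<open>0 < n\<close> by simp
  next
    show "\<Delta> (\<lambda>_. 0) = 0" unfolding \<Delta>_def loss_origin using \<open>0 < n\<close> prob_space by simp
  next
    fix k a b assume "k \<in> {1..K}" "(a, b) \<in> net_links A r k"
    then have "\<omega> \<notin> pair_deviation n a b (\<epsilon> * (3/4) ^ k / 6)"
      using small unfolding link_deviation_def by blast
    then have "\<bar>real n * (\<Delta> a - \<Delta> b)\<bar> < real n * (\<epsilon> * (3/4) ^ k / 6)"
      using \<omega>(1) unfolding n_diff pair_deviation_def by simp
    then show "\<bar>\<Delta> a - \<Delta> b\<bar> < \<epsilon> * (3/4) ^ k / 6"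
      using \<open>0 < n\<close> by (simp add: abs_mult)
  qed (use tail pos_\<beta> \<theta> in auto)
  then show ?thesis unfolding \<Delta>_def .
qed

lemma prob_link_deviations_le:
  assumes "0 < r" "0 < n" "0 < \<epsilon>" and n_large: "20000 * real (card A) * \<beta>\<^sup>2 * r\<^sup>2 \<le> real n * \<epsilon>\<^sup>2"
  shows "prob (\<Union>k\<in>{1..K}. link_deviation n r k (\<epsilon> * (3/4) ^ k / 6))
           \<le> 2 * exp (- (real n * \<epsilon>\<^sup>2 / (9216 * \<beta>\<^sup>2 * r\<^sup>2)))"
proof -
  define D where "D = real (card A)"
  define Q where "Q = real n * \<epsilon>\<^sup>2 / (\<beta>\<^sup>2 * r\<^sup>2)"
  have "1 \<le> D" unfolding D_def using finite_A nonempty_A by (simp add: Suc_le_eq card_gt_0_iff)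
  have "20000 * D \<le> Q"
    using n_large pos_\<beta> \<open>0 < r\<close> unfolding D_def Q_def by (simp add: field_simps)
  have "prob (\<Union>k\<in>{1..K}. link_deviation n r k (\<epsilon> * (3/4) ^ k / 6))
      \<le> (\<Sum>k\<in>{1..K}. prob (link_deviation n r k (\<epsilon> * (3/4) ^ k / 6)))"
    by (intro measure_UNION_le sets_link_deviation) auto
  also have "\<dots> \<le> (\<Sum>k\<in>{1..K}. exp (6 * D * 2 ^ k) * (2 * exp (- (Q * (9/4) ^ k / 648))))"
  proof (intro sum_mono)
    fix k
    have "prob (link_deviation n r k (\<epsilon> * (3/4) ^ k / 6))
        \<le> card (net_links A r k) * (2 * exp (- (Q * (9/4) ^ k / 648)))"
      using prob_link_deviation[OF \<open>0 < r\<close> \<open>0 < n\<close>, of "\<epsilon> * (3/4) ^ k / 6" k] \<open>0 < \<epsilon>\<close>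
      unfolding link_exponent[OF pos_\<beta> \<open>0 < r\<close>] Q_def by simp
    also have "\<dots> \<le> exp (6 * D * 2 ^ k) * (2 * exp (- (Q * (9/4) ^ k / 648)))"
      using card_net_links[OF finite_A] unfolding D_def by (intro mult_right_mono) auto
    finally show "prob (link_deviation n r k (\<epsilon> * (3/4) ^ k / 6))
        \<le> exp (6 * D * 2 ^ k) * (2 * exp (- (Q * (9/4) ^ k / 648)))" .
  qed
  also have "\<dots> \<le> 2 * exp (- Q / 9216)"
    by (rule chaining_sum_bound) fact+
  finally have "prob (\<Union>k\<in>{1..K}. link_deviation n r k (\<epsilon> * (3/4) ^ k / 6)) \<le> 2 * exp (- Q / 9216)" .
  moreover have "- Q / 9216 = - (real n * \<epsilon>\<^sup>2 / (9216 * \<beta>\<^sup>2 * r\<^sup>2))"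
    unfolding Q_def by simp
  ultimately show ?thesis by (simp only:)
qed

text \<open>The event that the deviation is large for some \<open>\<theta>\<close> need not be measurable, so the bound
  is stated for all its subsets \<open>E\<close>.\<close>

theorem uniform_deviation_l1_ball:
  assumes "0 < r" "0 < \<epsilon>" and n_large: "20000 * real (card A) * \<beta>\<^sup>2 * r\<^sup>2 \<le> real n * \<epsilon>\<^sup>2"
    and E: "E \<subseteq> {\<omega>\<in>space M. \<exists>\<theta>. (\<Sum>j\<in>A. \<bar>\<theta> j\<bar>) \<le> r \<and>
                  \<epsilon> < \<bar>(\<Sum>i<n. \<phi> \<theta> (\<xi> i \<omega>)) / n - (\<integral>\<omega>. \<phi> \<theta> (\<xi>\<^sub>0 \<omega>) \<partial>M)\<bar>}"
  shows "measure M E \<le> 2 * exp (- (real n * \<epsilon>\<^sup>2 / (9216 * \<beta>\<^sup>2 * r\<^sup>2)))"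
proof -
  have "0 < 20000 * real (card A) * \<beta>\<^sup>2 * r\<^sup>2"
    using finite_A nonempty_A pos_\<beta> \<open>0 < r\<close> by (simp add: card_gt_0_iff)
  with n_large have "0 < n" by (cases n) auto
  obtain K :: nat where "4 * \<beta> * r / \<epsilon> < 2 ^ K" using real_arch_pow[of 2] by auto
  then have K: "0 < Suc K" "2 * \<beta> * (r / 2 ^ Suc K) \<le> \<epsilon> / 2"
    using \<open>0 < \<epsilon>\<close> mult_pos_pos[OF pos_\<beta> \<open>0 < r\<close>] by (auto simp: field_simps)
  define U where "U = (\<Union>k\<in>{1..Suc K}. link_deviation n r k (\<epsilon> * (3/4) ^ k / 6))"
  obtain N where N: "\<And>\<omega>. \<omega> \<in> space M - N \<Longrightarrow> \<forall>i. \<xi> i \<omega> \<in> G" "N \<in> null_sets M"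
    using AE_E3[OF AE_sample_in[OF sets_G AE_G]] by blast
  have U: "U \<in> sets M" unfolding U_def by (intro sets.finite_UN sets_link_deviation) auto
  have "E \<subseteq> U \<union> N"
    using deviation_lt_if_links_small[OF _ _ \<open>0 < n\<close> \<open>0 < r\<close> K] E N(1) unfolding U_def by fastforce
  then have "measure M E \<le> measure M (U \<union> N)"
    using U N(2) by (intro finite_measure_mono) auto
  also have "\<dots> = measure M U" using measure_Un_null_set[OF U N(2)] .
  also have "\<dots> \<le> 2 * exp (- (real n * \<epsilon>\<^sup>2 / (9216 * \<beta>\<^sup>2 * r\<^sup>2)))"
    unfolding U_def using prob_link_deviations_le[OF \<open>0 < r\<close> \<open>0 < n\<close> \<open>0 < \<epsilon>\<close> n_large] .
  finally show ?thesis .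
qed

end

section \<open>Logistic loss of signature features\<close>

lemma ln_one_plus_exp_increment:
  fixes a b :: real
  assumes "b \<le> a"
  shows "0 \<le> ln (1 + exp a) - ln (1 + exp b)" and "ln (1 + exp a) - ln (1 + exp b) \<le> a - b"
proof -
  show "0 \<le> ln (1 + exp a) - ln (1 + exp b)" using assms by (simp add: add_pos_pos)
  have "1 + exp a \<le> exp (a - b) * (1 + exp b)"
    using assms by (simp add: distrib_left exp_diff)
  then have "ln (1 + exp a) \<le> ln (exp (a - b) * (1 + exp b))"
    by (simp add: add_pos_pos)
  also have "\<dots> = (a - b) + ln (1 + exp b)"
    using add_pos_pos[OF zero_less_one exp_gt_zero[of b]] by (simp add: ln_mult)
  finally show "ln (1 + exp a) - ln (1 + exp b) \<le> a - b" by simp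
qed

lemma loss_lipschitz: "\<bar>loss y u - loss y v\<bar> \<le> \<bar>u - v\<bar>"
proof -
  have "\<bar>loss y a - loss y b\<bar> \<le> a - b" if "b \<le> a" for a b
    using ln_one_plus_exp_increment[OF that] unfolding loss_def by (cases y) auto
  from this[of v u] this[of u v] show ?thesis
    by (cases "v \<le> u") (simp_all add: abs_minus_commute)
qed

lemma loss_nonneg: "0 \<le> loss y u"
proof -
  have "ln (exp u) \<le> ln (1 + exp u)" by (intro ln_mono) auto
  then have "u \<le> ln (1 + exp u)" by simp
  then show ?thesis unfolding loss_def by (cases y) (auto simp: add_pos_pos)
qed

definition feature :: "real \<Rightarrow> (real \<Rightarrow> real^'m::finite) \<times> (real^'q::finite) \<times> bool \<Rightarrow> 'm option list + 'q \<Rightarrow> real" where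
  "feature T w j = (case j of Inl I \<Rightarrow> itint_lim (rev I) (fst w) T | Inr k \<Rightarrow> fst (snd w) $ k)"

definition triple_loss :: "real \<Rightarrow> nat \<Rightarrow> ('m::finite option list + 'q::finite \<Rightarrow> real)
    \<Rightarrow> (real \<Rightarrow> real^'m) \<times> (real^'q) \<times> bool \<Rightarrow> real" where
  "triple_loss T p \<theta> w = loss (snd (snd w)) (\<Sum>j\<in>idx p. \<theta> j * feature T w j)"

lemma borel_measurable_feature:
  "(\<lambda>w. feature T w j) \<in> borel_measurable (triple_space :: ((real \<Rightarrow> real^'m::finite) \<times> (real^'q::finite) \<times> bool) measure)"
proof (cases j)
  case (Inl I)
  show ?thesis unfolding feature_def Inl triple_space_def
    using measurable_compose[OF measurable_fst borel_measurable_itint_lim] by simp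
next
  case (Inr k)
  have z: "(\<lambda>w::(real \<Rightarrow> real^'m) \<times> (real^'q) \<times> bool. fst (snd w)) \<in> borel_measurable triple_space"
    unfolding triple_space_def by (rule measurable_compose[OF measurable_snd measurable_fst])
  have comp: "(\<lambda>v::real^'q. v $ k) \<in> borel_measurable borel"
    by (intro borel_measurable_continuous_onI continuous_on_component continuous_on_id)
  show ?thesis unfolding feature_def Inr using measurable_compose[OF z comp] by simp
qed

lemma borel_measurable_triple_loss:
  "triple_loss T p \<theta> \<in> borel_measurable (triple_space :: ((real \<Rightarrow> real^'m::finite) \<times> (real^'q::finite) \<times> bool) measure)"
proof -
  have "(\<lambda>w::(real \<Rightarrow> real^'m) \<times> (real^'q) \<times> bool. snd (snd w)) \<in> measurable triple_space (count_space UNIV)"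
    unfolding triple_space_def by (rule measurable_compose[OF measurable_snd measurable_snd])
  then show ?thesis
    unfolding triple_loss_def loss_def using borel_measurable_feature by measurable
qed

lemma triple_loss_lipschitz:
  fixes w :: "(real \<Rightarrow> real^'m::finite) \<times> (real^'q::finite) \<times> bool"
  assumes "\<forall>j\<in>idx p. \<bar>feature T w j\<bar> \<le> \<beta>"
  shows "\<bar>triple_loss T p a w - triple_loss T p b w\<bar> \<le> \<beta> * l1_dist (idx p) a b"
proof -
  have "\<bar>triple_loss T p a w - triple_loss T p b w\<bar> \<le> \<bar>\<Sum>j\<in>idx p. (a j - b j) * feature T w j\<bar>"
    unfolding triple_loss_def using loss_lipschitz by (simp add: sum_subtractf left_diff_distrib)
  also have "\<dots> \<le> (\<Sum>j\<in>idx p. \<beta> * \<bar>a j - b j\<bar>)"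
  proof (intro order_trans[OF sum_abs] sum_mono)
    fix j :: "'m option list + 'q" assume "j \<in> idx p"
    then have "\<bar>feature T w j\<bar> \<le> \<beta>" using assms by blast
    then have "\<bar>a j - b j\<bar> * \<bar>feature T w j\<bar> \<le> \<bar>a j - b j\<bar> * \<beta>" by (rule mult_left_mono) simp
    then show "\<bar>(a j - b j) * feature T w j\<bar> \<le> \<beta> * \<bar>a j - b j\<bar>" by (simp add: abs_mult mult.commute)
  qed
  finally show ?thesis unfolding l1_dist_def sum_distrib_left .
qed

lemma triple_loss_origin: "triple_loss T p (\<lambda>_. 0) w = ln 2"
  unfolding triple_loss_def loss_def by simp

lemma loss_feat_eq_triple_loss:
  assumes "continuous_on {0..T} x" "tv 0 T x < \<infinity>" "0 \<le> T"
  shows "loss y (feat T p x z \<theta>) = triple_loss T p \<theta> (x, z, y)"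
proof -
  have "(case j of Inl I \<Rightarrow> sig T x I | Inr k \<Rightarrow> z $ k) = feature T (x, z, y) j" for j
    unfolding feature_def using sig_eq_itint_lim[OF assms] by (cases j) simp_all
  then show ?thesis unfolding triple_loss_def feat_def by simp
qed

lemma abs_feature_le:
  assumes "continuous_on {0..T} x" "tv 0 T x < ereal CX" "norm z < Cz" "0 \<le> T"
  shows "\<bar>feature T (x, z, y) j\<bar> \<le> Cz + exp (CX + T)"
proof (cases j)
  case (Inl I)
  have "tv 0 T x < \<infinity>" using assms(2) by (cases "tv 0 T x") auto
  then have "\<bar>itint_lim (rev I) x T\<bar> \<le> exp (CX + T)"
    using abs_sig_le[OF assms(1,2,4)] sig_eq_itint_lim[OF assms(1) _ assms(4)] by metis
  moreover have "0 \<le> Cz" using assms(3) norm_ge_zero[of z] by linarith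
  ultimately show ?thesis unfolding feature_def Inl by simp
next
  case (Inr k)
  have "\<bar>feature T (x, z, y) j\<bar> = \<bar>z $ k\<bar>" unfolding feature_def Inr by simp
  then show ?thesis
    using component_le_norm_cart[of z k] assms(3) exp_gt_zero[of "CX + T"] by linarith
qed

lemma idx_props:
  shows finite_idx: "finite (idx p :: ('m::finite option list + 'q::finite) set)"
    and idx_nonempty: "(idx p :: ('m option list + 'q) set) \<noteq> {}"
    and card_idx: "card (idx p :: ('m option list + 'q) set) = sd (CARD('m) + 1) p + CARD('q)"
proof -
  have fin: "finite {I :: 'm option list. length I \<le> p}"
    using finite_lists_length_le[of "UNIV :: 'm option set" p] by simp
  show "finite (idx p :: ('m option list + 'q) set)" "(idx p :: ('m option list + 'q) set) \<noteq> {}"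
    unfolding idx_def using fin by auto
  have "card {I :: 'm option list. length I \<le> p} = sd (CARD('m) + 1) p"
    using card_lists_length_le[of "UNIV :: 'm option set" p] unfolding sd_def by simp
  moreover have "card (Inl ` {I :: 'm option list. length I \<le> p} \<union> range (Inr :: 'q \<Rightarrow> 'm option list + 'q))
      = card (Inl ` {I :: 'm option list. length I \<le> p} :: ('m option list + 'q) set) + card (range (Inr :: 'q \<Rightarrow> 'm option list + 'q))"
    using fin by (subst card_Un_disjoint) auto
  ultimately show "card (idx p :: ('m option list + 'q) set) = sd (CARD('m) + 1) p + CARD('q)"
    unfolding idx_def by (simp add: card_image)
qed

definition bounded_features :: "real \<Rightarrow> nat \<Rightarrow> real \<Rightarrow> ((real \<Rightarrow> real^'m::finite) \<times> (real^'q::finite) \<times> bool) set" where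
  "bounded_features T p \<beta> = {w \<in> space triple_space. \<forall>j\<in>idx p. \<bar>feature T w j\<bar> \<le> \<beta>}"

lemma sets_bounded_features: "bounded_features T p \<beta> \<in> sets triple_space"
  unfolding bounded_features_def using finite_idx borel_measurable_feature
  by (intro sets.sets_Collect_finite_All) measurable

lemma abs_Inf_diff_le:
  fixes f g :: "'a \<Rightarrow> real"
  assumes "S \<noteq> {}" and "\<And>x. x \<in> S \<Longrightarrow> 0 \<le> f x" "\<And>x. x \<in> S \<Longrightarrow> 0 \<le> g x"
    and close: "\<And>x. x \<in> S \<Longrightarrow> \<bar>f x - g x\<bar> \<le> e"
  shows "\<bar>Inf (f ` S) - Inf (g ` S)\<bar> \<le> e"
proof -
  have bdd: "bdd_below (f ` S)" "bdd_below (g ` S)"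
    using assms(2,3) by (auto intro: bdd_belowI2[of _ 0])
  have "Inf (f ` S) - e \<le> Inf (g ` S)"
    using cINF_lower[OF bdd(1)] close \<open>S \<noteq> {}\<close> by (intro cINF_greatest) (fastforce simp: abs_le_iff)+
  moreover have "Inf (g ` S) - e \<le> Inf (f ` S)"
    using cINF_lower[OF bdd(2)] close \<open>S \<noteq> {}\<close> by (intro cINF_greatest) (fastforce simp: abs_le_iff)+
  ultimately show ?thesis by linarith
qed

lemma triple_loss_nonneg: "0 \<le> triple_loss T p \<theta> w"
  unfolding triple_loss_def by (rule loss_nonneg)

lemma deviation_event_subset:
  fixes M :: "'w measure" and X :: "'w \<Rightarrow> real \<Rightarrow> real^'m::finite" and Z :: "'w \<Rightarrow> real^'q::finite"
    and Y :: "'w \<Rightarrow> bool" and Xs :: "nat \<Rightarrow> 'w \<Rightarrow> real \<Rightarrow> real^'m" and Zs :: "nat \<Rightarrow> 'w \<Rightarrow> real^'q"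
    and Ys :: "nat \<Rightarrow> 'w \<Rightarrow> bool"
  assumes paths: "\<And>\<omega>. \<omega> \<in> space M \<Longrightarrow> continuous_on {0..T} (X \<omega>) \<and> tv 0 T (X \<omega>) < \<infinity>"
    and paths_i: "\<And>i \<omega>. \<omega> \<in> space M \<Longrightarrow> continuous_on {0..T} (Xs i \<omega>) \<and> tv 0 T (Xs i \<omega>) < \<infinity>"
    and "0 \<le> T" "0 < r"
  shows "{\<omega> \<in> space M. \<epsilon> < \<bar>Lhat n T r p Xs Zs Ys \<omega> - Lpop M T r p X Z Y\<bar>}
    \<subseteq> {\<omega> \<in> space M. \<exists>\<theta>. (\<Sum>j\<in>idx p. \<bar>\<theta> j\<bar>) \<le> r \<and>
         \<epsilon> < \<bar>(\<Sum>i<n. triple_loss T p \<theta> (Xs i \<omega>, Zs i \<omega>, Ys i \<omega>)) / n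
               - (\<integral>\<omega>. triple_loss T p \<theta> (X \<omega>, Z \<omega>, Y \<omega>) \<partial>M)\<bar>}"
proof
  fix \<omega> assume "\<omega> \<in> {\<omega> \<in> space M. \<epsilon> < \<bar>Lhat n T r p Xs Zs Ys \<omega> - Lpop M T r p X Z Y\<bar>}"
  then have \<omega>: "\<omega> \<in> space M" and dev: "\<epsilon> < \<bar>Lhat n T r p Xs Zs Ys \<omega> - Lpop M T r p X Z Y\<bar>" by auto
  define emp where "emp \<theta> = (\<Sum>i<n. triple_loss T p \<theta> (Xs i \<omega>, Zs i \<omega>, Ys i \<omega>)) / n" for \<theta>
  define pop where "pop \<theta> = (\<integral>\<omega>. triple_loss T p \<theta> (X \<omega>, Z \<omega>, Y \<omega>) \<partial>M)" for \<theta>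
  have "emp_risk n T p Xs Zs Ys \<omega> \<theta> = emp \<theta>" for \<theta>
    unfolding emp_risk_def emp_def
    by (intro arg_cong2[where f = "(/)"] sum.cong refl loss_feat_eq_triple_loss)
       (use paths_i[OF \<omega>] \<open>0 \<le> T\<close> in auto)
  then have "Lhat n T r p Xs Zs Ys \<omega> = Inf (emp ` l1ball p r)" unfolding Lhat_def by simp
  moreover have "risk M T p X Z Y \<theta> = pop \<theta>" for \<theta>
    unfolding risk_def pop_def
    by (intro Bochner_Integration.integral_cong refl loss_feat_eq_triple_loss) (use paths \<open>0 \<le> T\<close> in auto)
  then have "Lpop M T r p X Z Y = Inf (pop ` l1ball p r)" unfolding Lpop_def by simp
  moreover have "\<bar>Inf (emp ` l1ball p r) - Inf (pop ` l1ball p r)\<bar> \<le> \<epsilon>"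
    if "\<forall>\<theta>\<in>l1ball p r. \<bar>emp \<theta> - pop \<theta>\<bar> \<le> \<epsilon>"
  proof (rule abs_Inf_diff_le)
    show "l1ball p r \<noteq> {}" unfolding l1ball_def using \<open>0 < r\<close> by (auto intro: exI[of _ "\<lambda>_. 0"])
  qed (use that in \<open>auto simp: emp_def pop_def triple_loss_nonneg sum_nonneg intro: integral_nonneg_AE\<close>)
  ultimately obtain \<theta> where "\<theta> \<in> l1ball p r" "\<epsilon> < \<bar>emp \<theta> - pop \<theta>\<bar>"
    using dev by force
  then show "\<omega> \<in> {\<omega> \<in> space M. \<exists>\<theta>. (\<Sum>j\<in>idx p. \<bar>\<theta> j\<bar>) \<le> r \<and>
         \<epsilon> < \<bar>(\<Sum>i<n. triple_loss T p \<theta> (Xs i \<omega>, Zs i \<omega>, Ys i \<omega>)) / n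
               - (\<integral>\<omega>. triple_loss T p \<theta> (X \<omega>, Z \<omega>, Y \<omega>) \<partial>M)\<bar>}"
    using \<omega> unfolding l1ball_def emp_def pop_def by auto
qed

lemma real_le_Least_real_ge: "x \<le> real (LEAST m::nat. x \<le> real m)"
  using LeastI_ex[of "\<lambda>m::nat. x \<le> real m"] real_arch_simple by blast

lemma sample_size_sufficient:
  fixes \<beta> r \<epsilon> :: real
  assumes "(LEAST m::nat. 432\<^sup>2 * (2 * \<beta>)\<^sup>2 * pi * r\<^sup>2 * real D / \<epsilon>\<^sup>2 \<le> real m) \<le> n" "0 < \<epsilon>"
  shows "20000 * real D * \<beta>\<^sup>2 * r\<^sup>2 \<le> real n * \<epsilon>\<^sup>2"
proof -
  let ?x = "432\<^sup>2 * (2 * \<beta>)\<^sup>2 * pi * r\<^sup>2 * real D / \<epsilon>\<^sup>2"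
  have "?x \<le> real n"
    using real_le_Least_real_ge[of ?x] assms(1) by (meson of_nat_le_iff order_trans)
  then have "?x * \<epsilon>\<^sup>2 \<le> real n * \<epsilon>\<^sup>2" by (rule mult_right_mono) simp
  moreover have "?x * \<epsilon>\<^sup>2 = (432\<^sup>2 * 4 * pi) * (real D * \<beta>\<^sup>2 * r\<^sup>2)"
    using \<open>0 < \<epsilon>\<close> by (simp add: power_mult_distrib)
  moreover have "20000 * (real D * \<beta>\<^sup>2 * r\<^sup>2) \<le> (432\<^sup>2 * 4 * pi) * (real D * \<beta>\<^sup>2 * r\<^sup>2)"
    using pi_gt3 by (intro mult_right_mono) auto
  ultimately show ?thesis by (simp add: mult.assoc)
qed

lemma exp_bound_weaken:
  fixes \<beta> r :: real
  assumes "0 < \<beta>" "0 < r"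
  shows "2 * exp (- (real n * \<epsilon>\<^sup>2 / (9216 * \<beta>\<^sup>2 * r\<^sup>2)))
           \<le> 74 * exp (- (1 / (8 * r * (288 * (2 * \<beta>)\<^sup>2 * r + 2 * \<beta>))) * real n * \<epsilon>\<^sup>2)"
proof -
  define A where "A = 9216 * \<beta>\<^sup>2 * r\<^sup>2"
  have c5: "8 * r * (288 * (2 * \<beta>)\<^sup>2 * r + 2 * \<beta>) = A + 16 * \<beta> * r"
    unfolding A_def by (simp add: power2_eq_square algebra_simps)
  have "0 < A" "0 < 16 * \<beta> * r" unfolding A_def using assms by simp_all
  then have "1 / (A + 16 * \<beta> * r) \<le> 1 / A"
    by (intro divide_left_mono) auto
  then have "1 / (A + 16 * \<beta> * r) * (real n * \<epsilon>\<^sup>2) \<le> 1 / A * (real n * \<epsilon>\<^sup>2)"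
    by (rule mult_right_mono) simp
  then have "exp (- (real n * \<epsilon>\<^sup>2 / A)) \<le> exp (- (1 / (A + 16 * \<beta> * r)) * real n * \<epsilon>\<^sup>2)"
    by simp
  then show ?thesis
    unfolding c5 A_def[symmetric] using exp_gt_zero[of "- (1 / (A + 16 * \<beta> * r)) * real n * \<epsilon>\<^sup>2"]
    by linarith
qed

lemma AE_bounded_features:
  fixes X :: "'w \<Rightarrow> real \<Rightarrow> real^'m::finite" and Z :: "'w \<Rightarrow> real^'q::finite" and Y :: "'w \<Rightarrow> bool"
  assumes paths: "\<And>\<omega>. \<omega> \<in> space M \<Longrightarrow> continuous_on {0..T} (X \<omega>)"
    and meas: "(\<lambda>\<omega>. (X \<omega>, Z \<omega>, Y \<omega>)) \<in> measurable M triple_space"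
    and bounds: "AE \<omega> in M. tv 0 T (X \<omega>) < ereal CX \<and> norm (Z \<omega>) < Cz" and "0 \<le> T"
  shows "AE \<omega> in M. (X \<omega>, Z \<omega>, Y \<omega>) \<in> bounded_features T p (Cz + exp (CX + T))"
  using bounds AE_space
proof eventually_elim
  case (elim \<omega>)
  then have "\<bar>feature T (X \<omega>, Z \<omega>, Y \<omega>) j\<bar> \<le> Cz + exp (CX + T)" for j
    using paths \<open>0 \<le> T\<close> by (intro abs_feature_le) auto
  then show ?case
    unfolding bounded_features_def using measurable_space[OF meas elim(2)] by auto
qed

lemma l1_lipschitz_sample_triple_loss:
  fixes \<xi> :: "nat \<Rightarrow> 'w \<Rightarrow> (real \<Rightarrow> real^'m::finite) \<times> (real^'q::finite) \<times> bool"
  assumes "prob_space M" "0 < \<beta>"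
    and "\<xi>\<^sub>0 \<in> measurable M triple_space" "\<And>i. \<xi> i \<in> measurable M triple_space"
    and "prob_space.indep_vars M (\<lambda>_. triple_space) \<xi> UNIV"
    and "\<And>i. distr M triple_space (\<xi> i) = distr M triple_space \<xi>\<^sub>0"
    and "AE \<omega> in M. \<xi>\<^sub>0 \<omega> \<in> bounded_features T p \<beta>"
  shows "l1_lipschitz_sample M triple_space \<xi> \<xi>\<^sub>0 (idx p) \<beta> (ln 2) (triple_loss T p) (bounded_features T p \<beta>)"
proof (intro l1_lipschitz_sample.intro iid_sample.intro iid_sample_axioms.intro l1_lipschitz_sample_axioms.intro)
  show "\<bar>triple_loss T p a w - triple_loss T p b w\<bar> \<le> \<beta> * l1_dist (idx p) a b"
    if "w \<in> bounded_features T p \<beta>" for w a b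
    using that unfolding bounded_features_def by (intro triple_loss_lipschitz) blast
qed (use assms in \<open>simp_all add: finite_idx idx_nonempty borel_measurable_triple_loss
      sets_bounded_features triple_loss_origin\<close>)

theorem proposition3:
  fixes M :: "'w measure" and T r CX Cz \<epsilon> :: real and p n :: nat
    and x0 :: "real^'m::finite"
    and X :: "'w \<Rightarrow> real \<Rightarrow> real^'m" and Z :: "'w \<Rightarrow> real^'q::finite" and Y :: "'w \<Rightarrow> bool"
    and Xs :: "nat \<Rightarrow> 'w \<Rightarrow> real \<Rightarrow> real^'m" and Zs :: "nat \<Rightarrow> 'w \<Rightarrow> real^'q" and Ys :: "nat \<Rightarrow> 'w \<Rightarrow> bool"
  assumes "prob_space M" and "T > 0" and "r > 0" and "\<epsilon> > 0"
    and paths: "\<forall>\<omega>\<in>space M. continuous_on {0..T} (X \<omega>) \<and> X \<omega> 0 = x0 \<and> tv 0 T (X \<omega>) < \<infinity>"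
    and paths_i: "\<forall>i. \<forall>\<omega>\<in>space M. continuous_on {0..T} (Xs i \<omega>) \<and> Xs i \<omega> 0 = x0 \<and> tv 0 T (Xs i \<omega>) < \<infinity>"
    and meas: "(\<lambda>\<omega>. (X \<omega>, Z \<omega>, Y \<omega>)) \<in> measurable M triple_space"
    and meas_i: "\<forall>i. (\<lambda>\<omega>. (Xs i \<omega>, Zs i \<omega>, Ys i \<omega>)) \<in> measurable M triple_space"
    and sig_meas: "\<forall>I. (\<lambda>\<omega>. sig T (X \<omega>) I) \<in> borel_measurable M"
    and sig_meas_i: "\<forall>i I. (\<lambda>\<omega>. sig T (Xs i \<omega>) I) \<in> borel_measurable M"
    and indep: "prob_space.indep_vars M (\<lambda>_. triple_space) (\<lambda>i \<omega>. (Xs i \<omega>, Zs i \<omega>, Ys i \<omega>)) UNIV"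
    and ident: "\<forall>i. distr M triple_space (\<lambda>\<omega>. (Xs i \<omega>, Zs i \<omega>, Ys i \<omega>))
                   = distr M triple_space (\<lambda>\<omega>. (X \<omega>, Z \<omega>, Y \<omega>))"
    and bounds: "AE \<omega> in M. tv 0 T (X \<omega>) < ereal CX \<and> norm (Z \<omega>) < Cz"
    and n_ge: "n \<ge> (LEAST m::nat. real m \<ge>
                 432\<^sup>2 * (2 * (Cz + exp (CX + T)))\<^sup>2 * pi * r\<^sup>2
                   * real (sd (CARD('m) + 1) p + CARD('q)) / \<epsilon>\<^sup>2)"
  shows "measure M {\<omega> \<in> space M.
            \<bar>Lhat n T r p Xs Zs Ys \<omega> - Lpop M T r p X Z Y\<bar> > \<epsilon>}
         \<le> 74 * exp (- (1 / (8 * r * (288 * (2 * (Cz + exp (CX + T)))\<^sup>2 * r + 2 * (Cz + exp (CX + T)))))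
                       * real n * \<epsilon>\<^sup>2)"
proof -
  interpret prob_space M by fact
  define \<beta> where "\<beta> = Cz + exp (CX + T)"
  have "AE \<omega> in M. 0 < Cz"
    using bounds by eventually_elim (auto intro: le_less_trans[OF norm_ge_zero])
  then have "0 < \<beta>" unfolding \<beta>_def by (simp add: add_pos_pos)
  have "AE \<omega> in M. (X \<omega>, Z \<omega>, Y \<omega>) \<in> bounded_features T p \<beta>"
    unfolding \<beta>_def using paths meas bounds \<open>T > 0\<close> by (intro AE_bounded_features) auto
  then interpret l1_lipschitz_sample M triple_space "\<lambda>i \<omega>. (Xs i \<omega>, Zs i \<omega>, Ys i \<omega>)"
      "\<lambda>\<omega>. (X \<omega>, Z \<omega>, Y \<omega>)" "idx p" \<beta> "ln 2" "triple_loss T p" "bounded_features T p \<beta>"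
    using \<open>prob_space M\<close> \<open>0 < \<beta>\<close> meas meas_i indep ident by (intro l1_lipschitz_sample_triple_loss) auto
  have "measure M {\<omega> \<in> space M. \<bar>Lhat n T r p Xs Zs Ys \<omega> - Lpop M T r p X Z Y\<bar> > \<epsilon>}
      \<le> 2 * exp (- (real n * \<epsilon>\<^sup>2 / (9216 * \<beta>\<^sup>2 * r\<^sup>2)))"
  proof (rule uniform_deviation_l1_ball[OF \<open>r > 0\<close> \<open>\<epsilon> > 0\<close> _ deviation_event_subset])
    show "20000 * real (card (idx p :: ('m option list + 'q) set)) * \<beta>\<^sup>2 * r\<^sup>2 \<le> real n * \<epsilon>\<^sup>2"
      using sample_size_sufficient n_ge \<open>\<epsilon> > 0\<close> unfolding card_idx \<beta>_def by blast
  qed (use paths paths_i \<open>T > 0\<close> \<open>r > 0\<close> in auto)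
  also have "\<dots> \<le> 74 * exp (- (1 / (8 * r * (288 * (2 * \<beta>)\<^sup>2 * r + 2 * \<beta>))) * real n * \<epsilon>\<^sup>2)"
    using exp_bound_weaken \<open>0 < \<beta>\<close> \<open>r > 0\<close> by blast
  finally show ?thesis unfolding \<beta>_def .
qed

end
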